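(* Let $D$ be a positive discriminant, $\tau\in\mathbb H\times\mathbb H$ and $n>2$ an integer. The following are equivalent: (1) $\tau$ is fixed by an element $A\in\operatorname{SL}(\Lambda_D)$ of order $n$; (2) there is an automorphism of the principally polarized abelian variety $B_\tau$ of order $n$ commuting with $\iota_\tau(\mathcal O_D)$; (3) $\iota_\tau:\mathcal O_D\to\operatorname{End}(B_\tau)$ extends to complex multiplication by an order containing $\mathcal O_D[\zeta_n]$, where $\zeta_n$ is a primitive $n$th root of unity.
   Context: $\mathcal O_D=\mathbb Z[\frac{D+\sqrt D}2]$, $K_D=\mathcal O_D\otimes\mathbb Q$, $\sigma_\pm:K_D\to\mathbb R$ the embeddings with $\sigma_+(\sqrt D)>0>\sigma_-(\sqrt D)$, $\mathcal O_D^\vee=\frac1{\sqrt D}\mathcal O_D$, $\Lambda_D=\mathcal O_D\oplus\mathcal O_D^\vee$ with symplectic form $\langle(x_1,y_1),(x_2,y_2)\rangle=\operatorname{Tr}(x_1y_2-x_2y_1)$. $\operatorname{SL}(\Lambda_D)$ is the group of matrices $\begin{pmatrix}a&b\\c&d\end{pmatrix}$ with $ad-bc=1$, $a,d\in\mathcal O_D$, $b\in\sqrt D\mathcal O_D$, $c\in\mathcal O_D^\vee$, acting on $\mathbb H\times\mathbb H$ by $(\tau_+,\tau_-)\mapsto\big(\frac{\sigma_+(d)\tau_++\sigma_+(b)}{\sigma_+(c)\tau_++\sigma_+(a)},\frac{\sigma_-(d)\tau_-+\sigma_-(b)}{\sigma_-(c)\tau_-+\sigma_-(a)}\big)$. For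 $\tau=(\tau_+,\tau_-)$, $\phi_\tau(x,y)=(\sigma_+(x+y\tau_+),\sigma_-(x+y\tau_-))$, $B_\tau=\mathbb C^2/\phi_\tau(\Lambda_D)$ principally polarized by the symplectic form on $\Lambda_D$, and $\iota_\tau(x)$ is the endomorphism induced by $\operatorname{diag}(\sigma_+(x),\sigma_-(x))$. Complex multiplication by an order $\mathcal O$ (in a totally imaginary quadratic extension of $K_D$) is a proper homomorphism $\mathcal O\to\operatorname{End}(B_\tau)$ under which complex conjugation corresponds to the Rosati (symplectic adjoint) involution. *)

theory Defs
  imports "HOL-Analysis.Analysis"
begin

text \<open>An element (a,b) :: rat \<times> rat stands for a + b sqrt D in K_D = Q(sqrt D).\<close>

type_synonym kd = "rat \<times> rat"

definition real_quadratic_disc :: "int \<Rightarrow> bool" where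
  "real_quadratic_disc D \<longleftrightarrow> D > 0 \<and> (D mod 4 = 0 \<or> D mod 4 = 1) \<and> (\<nexists>k::int. k * k = D)"

definition kadd :: "kd \<Rightarrow> kd \<Rightarrow> kd" where
  "kadd x y = (fst x + fst y, snd x + snd y)"

definition ksub :: "kd \<Rightarrow> kd \<Rightarrow> kd" where
  "ksub x y = (fst x - fst y, snd x - snd y)"

definition kmul :: "int \<Rightarrow> kd \<Rightarrow> kd \<Rightarrow> kd" where
  "kmul D x y = (fst x * fst y + of_int D * snd x * snd y, fst x * snd y + snd x * fst y)"

definition kone :: kd where "kone = (1, 0)"
definition kzero :: kd where "kzero = (0, 0)"
definition ksqrt :: kd where "ksqrt = (0, 1)"

definition sigp :: "int \<Rightarrow> kd \<Rightarrow> real" where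
  "sigp D x = real_of_rat (fst x) + real_of_rat (snd x) * sqrt (real_of_int D)"
definition sigm :: "int \<Rightarrow> kd \<Rightarrow> real" where
  "sigm D x = real_of_rat (fst x) - real_of_rat (snd x) * sqrt (real_of_int D)"

definition ktrace :: "kd \<Rightarrow> rat" where
  "ktrace x = 2 * fst x"

text \<open>O_D = Z[(D + sqrt D)/2]\<close>
definition OD :: "int \<Rightarrow> kd set" where
  "OD D = {(of_int m + of_int k * of_int D / 2, of_int k / 2) | m k :: int. True}"

text \<open>O_D^dual = (1/sqrt D) O_D\<close>
definition OD_dual :: "int \<Rightarrow> kd set" where
  "OD_dual D = {kmul D (0, 1 / of_int D) x | x. x \<in> OD D}"

definition sqrtD_OD :: "int \<Rightarrow> kd set" where
  "sqrtD_OD D = {kmul D ksqrt x | x. x \<in> OD D}"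

definition LambdaD :: "int \<Rightarrow> (kd \<times> kd) set" where
  "LambdaD D = OD D \<times> OD_dual D"

definition symp :: "int \<Rightarrow> kd \<times> kd \<Rightarrow> kd \<times> kd \<Rightarrow> rat" where
  "symp D u v = ktrace (ksub (kmul D (fst u) (snd v)) (kmul D (fst v) (snd u)))"

text \<open>A matrix (a,b,c,d) stands for [[a,b],[c,d]].\<close>
type_synonym kmat = "kd \<times> kd \<times> kd \<times> kd"

definition kmat_mult :: "int \<Rightarrow> kmat \<Rightarrow> kmat \<Rightarrow> kmat" where
  "kmat_mult D A B = (case A of (a, b, c, d) \<Rightarrow> case B of (a', b', c', d') \<Rightarrow>
     (kadd (kmul D a a') (kmul D b c'), kadd (kmul D a b') (kmul D b d'),
      kadd (kmul D c a') (kmul D d c'), kadd (kmul D c b') (kmul D d d')))"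

definition kmat_id :: kmat where "kmat_id = (kone, kzero, kzero, kone)"

primrec kmat_pow :: "int \<Rightarrow> kmat \<Rightarrow> nat \<Rightarrow> kmat" where
  "kmat_pow D A 0 = kmat_id"
| "kmat_pow D A (Suc k) = kmat_mult D A (kmat_pow D A k)"

definition kmat_order :: "int \<Rightarrow> kmat \<Rightarrow> nat \<Rightarrow> bool" where
  "kmat_order D A n \<longleftrightarrow> n > 0 \<and> kmat_pow D A n = kmat_id \<and>
     (\<forall>k. 0 < k \<and> k < n \<longrightarrow> kmat_pow D A k \<noteq> kmat_id)"

definition SL_Lambda :: "int \<Rightarrow> kmat set" where
  "SL_Lambda D = {(a, b, c, d). ksub (kmul D a d) (kmul D b c) = kone \<and>
     a \<in> OD D \<and> d \<in> OD D \<and> b \<in> sqrtD_OD D \<and> c \<in> OD_dual D}"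

definition sl_act :: "int \<Rightarrow> kmat \<Rightarrow> complex \<times> complex \<Rightarrow> complex \<times> complex" where
  "sl_act D A \<tau> = (case A of (a, b, c, d) \<Rightarrow>
     ((of_real (sigp D d) * fst \<tau> + of_real (sigp D b)) / (of_real (sigp D c) * fst \<tau> + of_real (sigp D a)),
      (of_real (sigm D d) * snd \<tau> + of_real (sigm D b)) / (of_real (sigm D c) * snd \<tau> + of_real (sigm D a))))"

text \<open>C-linear endomorphisms of C^2 are 2x2 complex matrices.\<close>
type_synonym cmat = "complex^2^2"

definition phi :: "int \<Rightarrow> complex \<times> complex \<Rightarrow> kd \<times> kd \<Rightarrow> complex^2" where
  "phi D \<tau> u = (\<chi> i. if i = 1
      then of_real (sigp D (fst u)) + of_real (sigp D (snd u)) * fst \<tau>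
      else of_real (sigm D (fst u)) + of_real (sigm D (snd u)) * snd \<tau>)"

definition lattice :: "int \<Rightarrow> complex \<times> complex \<Rightarrow> (complex^2) set" where
  "lattice D \<tau> = phi D \<tau> ` LambdaD D"

text \<open>Endomorphisms of B_tau = C^2 / phi_tau(Lambda_D): C-linear maps preserving the lattice.\<close>
definition is_end :: "int \<Rightarrow> complex \<times> complex \<Rightarrow> cmat \<Rightarrow> bool" where
  "is_end D \<tau> M \<longleftrightarrow> (\<forall>p \<in> lattice D \<tau>. M *v p \<in> lattice D \<tau>)"

definition iota :: "int \<Rightarrow> complex \<times> complex \<Rightarrow> kd \<Rightarrow> cmat" where
  "iota D \<tau> x = (\<chi> i j. if i = j then (if i = 1 then of_real (sigp D x) else of_real (sigm D x)) else 0)"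

text \<open>Automorphism of the principally polarized abelian variety: invertible endomorphism
  preserving the symplectic form (transported from Lambda_D to the lattice by phi_tau).\<close>
definition ppav_aut :: "int \<Rightarrow> complex \<times> complex \<Rightarrow> cmat \<Rightarrow> bool" where
  "ppav_aut D \<tau> M \<longleftrightarrow> is_end D \<tau> M \<and>
     (\<exists>N. is_end D \<tau> N \<and> M ** N = mat 1 \<and> N ** M = mat 1) \<and>
     (\<forall>u \<in> LambdaD D. \<forall>v \<in> LambdaD D. \<forall>u' \<in> LambdaD D. \<forall>v' \<in> LambdaD D.
        M *v phi D \<tau> u = phi D \<tau> u' \<longrightarrow> M *v phi D \<tau> v = phi D \<tau> v' \<longrightarrow>
        symp D u' v' = symp D u v)"

primrec cmat_pow :: "cmat \<Rightarrow> nat \<Rightarrow> cmat" where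
  "cmat_pow M 0 = mat 1"
| "cmat_pow M (Suc k) = M ** cmat_pow M k"

definition cmat_order :: "cmat \<Rightarrow> nat \<Rightarrow> bool" where
  "cmat_order M n \<longleftrightarrow> n > 0 \<and> cmat_pow M n = mat 1 \<and>
     (\<forall>k. 0 < k \<and> k < n \<longrightarrow> cmat_pow M k \<noteq> mat 1)"

text \<open>Number fields are realised as subfields of C (no loss: every number field embeds in C,
  and for a CM field complex conjugation restricts to the CM involution).\<close>
definition subfield_C :: "complex set \<Rightarrow> bool" where
  "subfield_C L \<longleftrightarrow> 0 \<in> L \<and> 1 \<in> L \<and> (\<forall>x \<in> L. \<forall>y \<in> L. x + y \<in> L \<and> x * y \<in> L) \<and>
     (\<forall>x \<in> L. - x \<in> L \<and> inverse x \<in> L)"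

definition kd_embedding :: "int \<Rightarrow> complex set \<Rightarrow> (kd \<Rightarrow> complex) \<Rightarrow> bool" where
  "kd_embedding D L j \<longleftrightarrow> (\<forall>x. j x \<in> L) \<and> j kone = 1 \<and>
     (\<forall>x y. j (kadd x y) = j x + j y \<and> j (kmul D x y) = j x * j y)"

definition totally_imaginary :: "complex set \<Rightarrow> bool" where
  "totally_imaginary L \<longleftrightarrow> (\<forall>f :: complex \<Rightarrow> complex.
     (f 1 = 1 \<and> (\<forall>x \<in> L. \<forall>y \<in> L. f (x + y) = f x + f y \<and> f (x * y) = f x * f y))
     \<longrightarrow> (\<exists>x \<in> L. f x \<notin> \<real>))"

definition CM_ext :: "int \<Rightarrow> complex set \<Rightarrow> (kd \<Rightarrow> complex) \<Rightarrow> bool" where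
  "CM_ext D L j \<longleftrightarrow> subfield_C L \<and> kd_embedding D L j \<and> totally_imaginary L \<and>
     (\<exists>w \<in> L. w \<notin> range j \<and> L = {j a + j b * w | a b. True})"

definition order_in :: "complex set \<Rightarrow> complex set \<Rightarrow> bool" where
  "order_in L Ord \<longleftrightarrow> Ord \<subseteq> L \<and> 1 \<in> Ord \<and>
     (\<forall>x \<in> Ord. \<forall>y \<in> Ord. x + y \<in> Ord \<and> x * y \<in> Ord \<and> - x \<in> Ord) \<and>
     (\<exists>S. finite S \<and> S \<subseteq> Ord \<and> Ord = {\<Sum>s\<in>S. of_int (c s) * s | c. True}) \<and>
     (\<forall>x \<in> L. \<exists>m::int. m > 0 \<and> of_int m * x \<in> Ord)"

text \<open>Complex multiplication by Ord: a proper ring homomorphism Ord -> End(B_tau) under which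
  complex conjugation corresponds to the Rosati involution (adjoint for the polarization).\<close>
definition CM_hom :: "int \<Rightarrow> complex \<times> complex \<Rightarrow> complex set \<Rightarrow> complex set \<Rightarrow> (complex \<Rightarrow> cmat) \<Rightarrow> bool" where
  "CM_hom D \<tau> L Ord \<rho> \<longleftrightarrow>
     \<rho> 1 = mat 1 \<and> (\<forall>x \<in> Ord. is_end D \<tau> (\<rho> x)) \<and>
     (\<forall>x \<in> Ord. \<forall>y \<in> Ord. \<rho> (x + y) = \<rho> x + \<rho> y \<and> \<rho> (x * y) = \<rho> x ** \<rho> y) \<and>
     \<comment> \<open>proper: does not extend to a larger order in L\<close>
     (\<forall>x \<in> L. \<forall>m::int. m > 0 \<longrightarrow> of_int m * x \<in> Ord \<longrightarrow>
        is_end D \<tau> ((1 / real_of_int m) *\<^sub>R \<rho> (of_int m * x)) \<longrightarrow> x \<in> Ord) \<and>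
     \<comment> \<open>complex conjugation = Rosati involution\<close>
     (\<forall>a \<in> Ord. cnj a \<in> Ord \<and>
        (\<forall>u \<in> LambdaD D. \<forall>v \<in> LambdaD D. \<forall>u' \<in> LambdaD D. \<forall>v' \<in> LambdaD D.
           \<rho> a *v phi D \<tau> u = phi D \<tau> u' \<longrightarrow> \<rho> (cnj a) *v phi D \<tau> v = phi D \<tau> v' \<longrightarrow>
           symp D u' v = symp D u v'))"

definition primitive_root :: "nat \<Rightarrow> complex \<Rightarrow> bool" where
  "primitive_root n z \<longleftrightarrow> z ^ n = 1 \<and> (\<forall>k. 0 < k \<and> k < n \<longrightarrow> z ^ k \<noteq> 1)"

definition CM_extends :: "int \<Rightarrow> complex \<times> complex \<Rightarrow> nat \<Rightarrow> bool" where
  "CM_extends D \<tau> n \<longleftrightarrow> (\<exists>L j Ord \<rho> \<zeta>. CM_ext D L j \<and> order_in L Ord \<and> CM_hom D \<tau> L Ord \<rho> \<and>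
     (\<forall>x \<in> OD D. j x \<in> Ord \<and> \<rho> (j x) = iota D \<tau> x) \<and>
     \<zeta> \<in> Ord \<and> primitive_root n \<zeta>)"

end

theory Submission
  imports Defs
begin

text \<open>
  An element A = (a,b,c,d) of SL(Lambda_D) fixing tau acts on C^2, transported by phi_tau, as the
  diagonal matrix of its automorphy factors (sigma_+(a) + sigma_+(c) tau_+, sigma_-(a) + sigma_-(c) tau_-);
  conversely an automorphism commuting with iota_tau(sqrt D) is diagonal, hence given by an integral
  matrix, whose determinant is forced to be 1 by the polarization. Since phi_tau is injective, orders agree.
  Given such an automorphism with eigenvalues (alpha, beta), alpha is a non-real primitive n-th root of unity
  satisfying alpha^2 = tr A alpha - 1, so L = K_D(alpha) is a CM field. The map
  p + q alpha \<mapsto> diag(p + q alpha, p' + q' beta) identifies the order of those z in L acting on the lattice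
  with complex multiplication; complex conjugation cnj alpha = tr A - alpha corresponds to the adjugate
  matrix, i.e. to the Rosati involution. Conversely, complex multiplication is injective on an order
  spanning L, so it sends zeta_n to an automorphism of order n, and cnj zeta_n = zeta_n^-1 makes it symplectic.
\<close>

lemma of_rat_neq_sqrt_of_nonsquare:
  fixes D :: int and r :: rat
  assumes "\<nexists>k::int. k * k = D" "D \<ge> 0"
  shows "real_of_rat r \<noteq> sqrt (real_of_int D)"
proof
  assume "real_of_rat r = sqrt (real_of_int D)"
  hence "real_of_rat (r * r) = real_of_rat (of_int D)" using assms(2) by (simp add: of_rat_mult)
  hence rr: "r * r = of_int D" by (simp only: of_rat_eq_iff)
  obtain p q where pq: "quotient_of r = (p, q)" by (cases "quotient_of r")
  have q0: "q > 0" and cop: "coprime p q" and r: "r = of_int p / of_int q"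
    using quotient_of_denom_pos[OF pq] quotient_of_coprime[OF pq] quotient_of_div[OF pq] by auto
  have "(of_int (p * p) :: rat) = of_int (D * q * q)"
    using rr q0 unfolding r by (simp add: field_simps)
  hence e: "p * p = D * q * q" by (simp only: of_int_eq_iff)
  have "coprime q (p * p)" using cop by (simp add: coprime_commute)
  hence "is_unit q" using coprime_common_divisor[of q "p * p" q] e by simp
  hence "q = 1" using q0 by simp
  thus False using e assms(1) by auto
qed

lemma complex_affine_coeffs_eq:
  fixes w :: complex
  assumes "Im w \<noteq> 0" "of_real a + of_real b * w = of_real a' + of_real b' * w"
  shows "a = a' \<and> b = b'"
proof -
  have "b * Im w = b' * Im w" using arg_cong[OF assms(2), of Im] by simp
  hence "b = b'" using assms(1) by simp
  thus ?thesis using assms(2) by simp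
qed

lemma norm_root_of_unity:
  fixes z :: complex assumes "z ^ n = 1" "n > 0" shows "norm z = 1"
proof -
  have "norm z ^ n = 1 ^ n" using assms(1) by (metis norm_one norm_power power_one)
  thus ?thesis using assms(2) power_eq_imp_eq_base[of "norm z" n 1] by simp
qed

lemma cnj_mult_root_of_unity:
  fixes z :: complex assumes "z ^ n = 1" "n > 0" shows "cnj z * z = 1"
  using complex_norm_square[of z] norm_root_of_unity[OF assms] by (simp add: mult.commute)

lemma real_root_of_unity_square:
  fixes z :: complex assumes "z ^ n = 1" "n > 0" "z \<in> \<real>" shows "z\<^sup>2 = 1"
proof -
  obtain r where r: "z = of_real r" using assms(3) by (auto elim: Reals_cases)
  have "\<bar>r\<bar> = 1" using norm_root_of_unity[OF assms(1,2)] r by simp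
  hence "r * r = 1" by (metis abs_mult_self_eq mult_1)
  thus ?thesis using r by (simp add: power2_eq_square flip: of_real_mult)
qed

text \<open>A field homomorphism into C must map a root of unity other than \<plusminus>1 to a non-real number.\<close>
lemma totally_imaginary_if_root_of_unity:
  assumes L: "subfield_C L" and \<zeta>: "\<zeta> \<in> L" "\<zeta> ^ n = 1" "n > 0" "\<zeta>\<^sup>2 \<noteq> 1"
  shows "totally_imaginary L"
  unfolding totally_imaginary_def
proof (intro allI impI)
  fix f :: "complex \<Rightarrow> complex"
  assume f: "f 1 = 1 \<and> (\<forall>x \<in> L. \<forall>y \<in> L. f (x + y) = f x + f y \<and> f (x * y) = f x * f y)"
  have cl: "0 \<in> L" "1 \<in> L" "\<And>x y. x \<in> L \<Longrightarrow> y \<in> L \<Longrightarrow> x + y \<in> L \<and> x * y \<in> L"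
    "\<And>x. x \<in> L \<Longrightarrow> - x \<in> L \<and> inverse x \<in> L"
    using L unfolding subfield_C_def by auto
  have pow: "\<zeta> ^ k \<in> L \<and> f (\<zeta> ^ k) = f \<zeta> ^ k" for k
    by (induction k) (use f cl \<zeta>(1) in auto)
  have f0: "f 0 = 0" using f cl(1) by (metis add_0 add_cancel_right_right)
  have fm1: "f (- 1) = - 1" using f cl(2) cl(4)[OF cl(2)] f0 by (metis add_eq_0_iff2)
  define y where "y = \<zeta>\<^sup>2 + - 1"
  have m1: "- 1 \<in> L" using cl(2,4) by blast
  hence "y \<in> L" unfolding y_def using cl(3) pow by blast
  moreover have "y \<noteq> 0" unfolding y_def using \<zeta>(4) by simp
  ultimately have y: "y \<in> L" "y \<noteq> 0" .
  show "\<exists>x \<in> L. f x \<notin> \<real>"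
  proof (rule ccontr)
    assume "\<not> (\<exists>x \<in> L. f x \<notin> \<real>)"
    hence "f \<zeta> \<in> \<real>" using \<zeta>(1) by blast
    hence "f (\<zeta>\<^sup>2) = 1" using real_root_of_unity_square[of "f \<zeta>" n] pow[of n] pow[of 2] \<zeta> f by simp
    moreover have "f y = f (\<zeta>\<^sup>2) + f (- 1)" unfolding y_def using f pow m1 by blast
    ultimately have "f y = 0" using fm1 by simp
    moreover have "f (y * inverse y) = f y * f (inverse y)" using f y(1) cl(4) by blast
    ultimately show False using y(2) f by simp
  qed
qed

definition diag :: "complex \<Rightarrow> complex \<Rightarrow> cmat" where
  "diag z1 z2 = (\<chi> i j. if i = j then (if i = 1 then z1 else z2) else 0)"

definition vec2 :: "complex \<Rightarrow> complex \<Rightarrow> complex^2" where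
  "vec2 w1 w2 = (\<chi> i. if i = 1 then w1 else w2)"

lemma vec2_nth [simp]: "vec2 a b $ 1 = a" "vec2 a b $ 2 = b"
  by (simp_all add: vec2_def)

lemma vec2_eq_iff: "vec2 a b = vec2 c d \<longleftrightarrow> a = c \<and> b = d"
  by (auto simp: vec_eq_iff forall_2)

lemma vec2_add: "vec2 a b + vec2 c d = vec2 (a + c) (b + d)"
  by (simp add: vec_eq_iff forall_2)

lemma diag_eq_iff: "diag a b = diag c d \<longleftrightarrow> a = c \<and> b = d"
  by (auto simp: vec_eq_iff forall_2 diag_def)

lemma diag_mult: "diag a b ** diag c d = diag (a * c) (b * d)"
  by (simp add: vec_eq_iff forall_2 matrix_matrix_mult_def sum_2 diag_def)

lemma diag_mult_vec2: "diag a b *v vec2 x y = vec2 (a * x) (b * y)"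
  by (simp add: vec_eq_iff forall_2 matrix_vector_mult_def sum_2 diag_def vec2_def)

lemma mat_1_eq_diag: "(mat 1 :: cmat) = diag 1 1"
  by (simp add: vec_eq_iff forall_2 mat_def diag_def)

lemma diag_zero: "diag 0 0 = 0"
  by (simp add: vec_eq_iff forall_2 diag_def)

lemma diag_add: "diag a b + diag c d = diag (a + c) (b + d)"
  by (simp add: vec_eq_iff forall_2 diag_def)

lemma scaleR_diag: "r *\<^sub>R diag a b = diag (r *\<^sub>R a) (r *\<^sub>R b)"
  by (simp add: vec_eq_iff forall_2 diag_def)

lemma cmat_pow_diag: "cmat_pow (diag a b) k = diag (a ^ k) (b ^ k)"
  by (induction k) (simp_all add: mat_1_eq_diag diag_mult)

lemma commute_diag_imp_diag:
  fixes M :: cmat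
  assumes "M ** diag a b = diag a b ** M" "a \<noteq> b"
  shows "M = diag (M$1$1) (M$2$2)"
proof -
  have "(M ** diag a b) $ 1 $ 2 = (diag a b ** M) $ 1 $ 2" "(M ** diag a b) $ 2 $ 1 = (diag a b ** M) $ 2 $ 1"
    using assms by simp_all
  hence "M$1$2 * b = a * M$1$2" "M$2$1 * a = b * M$2$1"
    by (simp_all add: matrix_matrix_mult_def sum_2 diag_def)
  hence "M$1$2 = 0" "M$2$1 = 0" using assms(2)
    by (metis mult.commute mult_cancel_left)+
  thus ?thesis by (simp add: vec_eq_iff forall_2 diag_def)
qed

text \<open>
  The hypotheses z = A + C t and z t = B + E t say that (1, t) is an eigenvector with eigenvalue z of the
  transpose of [[A, B], [C, E]]; this is how automorphy factors of a fixed point arise.\<close>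

lemma eigen_mult_affine:
  fixes z X Y t A B C E :: complex
  assumes "z = A + C * t" "z * t = B + E * t"
  shows "z * (X + Y * t) = (X * A + Y * B) + (X * C + Y * E) * t"
proof -
  have "z * (X + Y * t) = X * z + Y * (z * t)" by (simp add: algebra_simps)
  also have "\<dots> = X * (A + C * t) + Y * (B + E * t)" using assms by simp
  finally show ?thesis by (simp add: algebra_simps)
qed

lemma eigen_shift:
  fixes z A B C E t P Q :: complex
  assumes "z = A + C * t" "z * t = B + E * t"
  shows "P + Q * z = (P + Q * A) + (Q * C) * t" "(P + Q * z) * t = Q * B + (P + Q * E) * t"
  using assms eigen_mult_affine[OF assms, of P Q] by (simp_all add: algebra_simps)

lemma eigen_inverse:
  fixes z A B C E t :: complex
  assumes "z = A + C * t" "z * t = B + E * t" "A * E - B * C = 1"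
  shows "z * (E - C * t) = 1" "z * (A * t - B) = t"
proof -
  have "z * (E - C * t) = E * z - C * (z * t)" by (simp add: algebra_simps)
  also have "\<dots> = E * (A + C * t) - C * (B + E * t)" using assms by simp
  also have "\<dots> = A * E - B * C" by (simp add: algebra_simps)
  finally show "z * (E - C * t) = 1" using assms(3) by simp
  have "z * (A * t - B) = A * (z * t) - B * z" by (simp add: algebra_simps)
  also have "\<dots> = A * (B + E * t) - B * (A + C * t)" using assms by simp
  also have "\<dots> = (A * E - B * C) * t" by (simp add: algebra_simps)
  finally show "z * (A * t - B) = t" using assms(3) by simp
qed

lemma eigen_quadratic:
  fixes z A B C E t :: complex
  assumes "z = A + C * t" "z * t = B + E * t" "A * E - B * C = 1"
  shows "z * z = (A + E) * z - 1"
proof -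
  have "z * z = A * z + C * (z * t)" using assms(1) by (simp add: algebra_simps)
  also have "\<dots> = A * z + C * B + E * (C * t)" using assms(2) by (simp add: algebra_simps)
  also have "\<dots> = A * z + C * B + E * (z - A)" using assms(1) by simp
  also have "\<dots> = (A + E) * z - (A * E - B * C)" by (simp add: algebra_simps)
  finally show ?thesis using assms(3) by simp
qed

lemma quadratic_mult:
  fixes \<alpha> T P Q P' Q' :: complex
  assumes "\<alpha> * \<alpha> = T * \<alpha> - 1"
  shows "(P + Q * \<alpha>) * (P' + Q' * \<alpha>) = (P * P' - Q * Q') + (P * Q' + Q * P' + Q * Q' * T) * \<alpha>"
proof -
  have "(P + Q * \<alpha>) * (P' + Q' * \<alpha>) = P * P' + (P * Q' + Q * P') * \<alpha> + Q * Q' * (\<alpha> * \<alpha>)"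
    by (simp add: algebra_simps)
  thus ?thesis unfolding assms by (simp add: algebra_simps)
qed

lemma rat_eq_div_plus_mod:
  assumes "N > 0" "of_int N * r = (of_int i :: rat)"
  shows "r = of_int (i div N) + of_int (i mod N) / of_int N"
proof -
  have "(of_int i :: rat) = of_int N * of_int (i div N) + of_int (i mod N)"
    by (metis div_mult_mod_eq of_int_add of_int_mult mult.commute)
  thus ?thesis using assms by (simp add: field_simps)
qed

definition int_denom :: "int \<Rightarrow> kd \<Rightarrow> bool" where
  "int_denom N x \<longleftrightarrow> of_int N * fst x \<in> \<int> \<and> of_int N * snd x \<in> \<int>"

lemma int_denom_dvd: assumes "int_denom N x" "N dvd M" shows "int_denom M x"
proof -
  obtain k where "M = N * k" using assms(2) by blast
  hence eq: "of_int M * fst x = of_int k * (of_int N * fst x)" "of_int M * snd x = of_int k * (of_int N * snd x)"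
    by (simp_all add: algebra_simps)
  show ?thesis using assms(1) Ints_mult[OF Ints_of_int] unfolding int_denom_def eq by blast
qed

lemma int_denom_exists: "\<exists>N > 0. int_denom N x"
proof -
  have "\<exists>q::int. q > 0 \<and> of_int q * r \<in> \<int>" for r :: rat
  proof -
    obtain p q where pq: "quotient_of r = (p, q)" by (cases "quotient_of r")
    hence "q > 0" using quotient_of_denom_pos by blast
    moreover have "of_int q * r = of_int p" using quotient_of_div[OF pq] \<open>q > 0\<close> by simp
    ultimately show ?thesis by (metis Ints_of_int)
  qed
  then obtain q1 q2 :: int where "q1 > 0" "of_int q1 * fst x \<in> \<int>" "q2 > 0" "of_int q2 * snd x \<in> \<int>"
    by meson
  hence "int_denom q1 (fst x, 0)" "int_denom q2 (0, snd x)" unfolding int_denom_def by auto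
  hence "int_denom (q1 * q2) (fst x, 0)" "int_denom (q1 * q2) (0, snd x)" by (auto elim: int_denom_dvd)
  thus ?thesis using \<open>q1 > 0\<close> \<open>q2 > 0\<close> unfolding int_denom_def by (intro exI[of _ "q1 * q2"]) auto
qed

lemma int_denom_ksub: "int_denom N x \<Longrightarrow> int_denom N y \<Longrightarrow> int_denom N (ksub x y)"
  unfolding int_denom_def ksub_def by (simp add: right_diff_distrib)

lemma int_denom_kmul: assumes "int_denom N x" "int_denom N' y" shows "int_denom (N * N') (kmul D x y)"
proof -
  have "of_int (N * N') * fst (kmul D x y) = (of_int N * fst x) * (of_int N' * fst y) + of_int D * ((of_int N * snd x) * (of_int N' * snd y))"
       "of_int (N * N') * snd (kmul D x y) = (of_int N * fst x) * (of_int N' * snd y) + (of_int N * snd x) * (of_int N' * fst y)"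
    by (simp_all add: kmul_def algebra_simps)
  thus ?thesis using assms unfolding int_denom_def by simp
qed

definition int_span :: "'a::comm_ring_1 set \<Rightarrow> 'a set" where
  "int_span S = {\<Sum>s\<in>S. of_int (c s) * s | c. True}"

lemma int_spanI: "x = (\<Sum>s\<in>S. of_int (c s) * s) \<Longrightarrow> x \<in> int_span S"
  unfolding int_span_def by blast

lemma int_span_base: assumes "finite S" "x \<in> S" shows "x \<in> int_span S"
proof -
  have "(\<Sum>s\<in>S. of_int (if s = x then 1 else 0) * s) = (\<Sum>s\<in>S. if s = x then s else 0)"
    by (rule sum.cong) auto
  also have "\<dots> = x" using assms by simp
  finally have "x = (\<Sum>s\<in>S. of_int (if s = x then 1 else 0) * s)" ..
  thus ?thesis by (rule int_spanI)
qed

lemma int_span_add: assumes "x \<in> int_span S" "y \<in> int_span S" shows "x + y \<in> int_span S"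
proof -
  obtain c c' where "x = (\<Sum>s\<in>S. of_int (c s) * s)" "y = (\<Sum>s\<in>S. of_int (c' s) * s)"
    using assms unfolding int_span_def by blast
  hence "x + y = (\<Sum>s\<in>S. of_int (c s + c' s) * s)" by (simp add: distrib_right sum.distrib)
  thus ?thesis by (rule int_spanI)
qed

lemma int_span_of_int_mult: assumes "x \<in> int_span S" shows "of_int k * x \<in> int_span S"
proof -
  obtain c where "x = (\<Sum>s\<in>S. of_int (c s) * s)" using assms unfolding int_span_def by blast
  hence "of_int k * x = (\<Sum>s\<in>S. of_int (k * c s) * s)" by (simp add: sum_distrib_left mult.assoc)
  thus ?thesis by (rule int_spanI)
qed

lemma int_span_subset:
  assumes "S \<subseteq> R" "0 \<in> R" "\<And>x y. x \<in> R \<Longrightarrow> y \<in> R \<Longrightarrow> x + y \<in> R" "\<And>k x. x \<in> R \<Longrightarrow> of_int k * x \<in> R"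
  shows "int_span S \<subseteq> R"
proof -
  have "(\<Sum>s\<in>T. of_int (c s) * s) \<in> R" if "T \<subseteq> S" for T c
  proof (cases "finite T")
    case True thus ?thesis using that by (induction T rule: finite_induct) (use assms in auto)
  qed (use assms in simp)
  thus ?thesis unfolding int_span_def by blast
qed

section \<open>The lattice Lambda_D and the abelian surface B_tau\<close>

locale hilbert_point =
  fixes D :: int and \<tau> :: "complex \<times> complex"
  assumes disc: "real_quadratic_disc D"
    and Im_fst_pos: "Im (fst \<tau>) > 0" and Im_snd_pos: "Im (snd \<tau>) > 0"
begin

abbreviation "sp \<equiv> sigp D"
abbreviation "sm \<equiv> sigm D"
abbreviation "km \<equiv> kmul D"

lemma D_pos: "D > 0" and nonsquare: "\<nexists>k::int. k * k = D" and D_mod_4: "D mod 4 = 0 \<or> D mod 4 = 1"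
  using disc unfolding real_quadratic_disc_def by auto

lemma D_rat_nonzero: "(of_int D :: rat) \<noteq> 0"
  using D_pos by simp

lemma sigp_kadd [simp]: "sp (kadd x y) = sp x + sp y"
  and sigm_kadd [simp]: "sm (kadd x y) = sm x + sm y"
  and sigp_ksub [simp]: "sp (ksub x y) = sp x - sp y"
  and sigm_ksub [simp]: "sm (ksub x y) = sm x - sm y"
  by (simp_all add: sigp_def sigm_def kadd_def ksub_def of_rat_add of_rat_diff algebra_simps)

lemma sigp_kmul [simp]: "sp (km x y) = sp x * sp y"
  and sigm_kmul [simp]: "sm (km x y) = sm x * sm y"
  using D_pos by (simp_all add: sigp_def sigm_def kmul_def of_rat_add of_rat_mult algebra_simps)

lemma sigp_kone [simp]: "sp kone = 1" and sigm_kone [simp]: "sm kone = 1"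
  and sigp_kzero [simp]: "sp kzero = 0" and sigm_kzero [simp]: "sm kzero = 0"
  and sigp_rat [simp]: "sp (r, 0) = real_of_rat r" and sigm_rat [simp]: "sm (r, 0) = real_of_rat r"
  by (simp_all add: sigp_def sigm_def kone_def kzero_def)

lemma sigp_sqrt: "sp (0, 1) = sqrt (real_of_int D)" and sigm_sqrt: "sm (0, 1) = - sqrt (real_of_int D)"
  by (simp_all add: sigp_def sigm_def)

text \<open>Both embeddings are injective because sqrt D is irrational.\<close>
lemma sigp_eq_0_iff: "sp x = 0 \<longleftrightarrow> x = kzero"
  and sigm_eq_0_iff: "sm x = 0 \<longleftrightarrow> x = kzero"
proof -
  have key: "real_of_rat (fst x) + real_of_rat (snd x) * s = 0 \<longleftrightarrow> x = kzero"
    if "\<bar>s\<bar> = sqrt (real_of_int D)" for s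
  proof (cases "snd x = 0")
    case False
    have "real_of_rat (fst x) + real_of_rat (snd x) * s \<noteq> 0"
    proof
      assume "real_of_rat (fst x) + real_of_rat (snd x) * s = 0"
      hence "real_of_rat (fst x) = - (s * real_of_rat (snd x))" by (simp add: eq_neg_iff_add_eq_0 mult.commute)
      hence "\<bar>real_of_rat (fst x)\<bar> = sqrt (real_of_int D) * \<bar>real_of_rat (snd x)\<bar>"
        using that by (simp add: abs_mult)
      hence "real_of_rat \<bar>fst x / snd x\<bar> = sqrt (real_of_int D)"
        using False by (simp flip: abs_of_rat add: of_rat_divide field_simps)
      thus False using of_rat_neq_sqrt_of_nonsquare[OF nonsquare, of "\<bar>fst x / snd x\<bar>"] D_pos by simp
    qed
    thus ?thesis using False by (auto simp: kzero_def)
  qed (cases x, simp add: kzero_def)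
  have "\<bar>sqrt (real_of_int D)\<bar> = sqrt (real_of_int D)" using D_pos by simp
  from key[OF this] key[of "- sqrt (real_of_int D)"] this
  show "sp x = 0 \<longleftrightarrow> x = kzero" "sm x = 0 \<longleftrightarrow> x = kzero"
    by (simp_all add: sigp_def sigm_def)
qed

lemma ksub_eq_kzero_iff: "ksub x y = kzero \<longleftrightarrow> x = y"
  by (cases x, cases y) (simp add: ksub_def kzero_def)

lemma sigp_inj: "sp x = sp y \<longleftrightarrow> x = y" and sigm_inj: "sm x = sm y \<longleftrightarrow> x = y"
  using sigp_eq_0_iff[of "ksub x y"] sigm_eq_0_iff[of "ksub x y"] by (auto simp: ksub_eq_kzero_iff)

lemma kd_eqI: "sp x = sp y \<Longrightarrow> x = y"
  using sigp_inj by blast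

lemma kmul_kone [simp]: "km x kone = x" "km kone x = x"
  and kmul_kzero [simp]: "km x kzero = kzero" "km kzero x = kzero"
  and kadd_kzero [simp]: "kadd x kzero = x" "kadd kzero x = x"
  and ksub_kzero [simp]: "ksub x kzero = x"
  by (rule kd_eqI, simp)+

lemma kmul_commute: "km x y = km y x"
  by (rule kd_eqI) simp

lemma OD_iff: "x \<in> OD D \<longleftrightarrow> (\<exists>m k::int. x = (of_int m + of_int k * of_int D / 2, of_int k / 2))"
  unfolding OD_def by auto

lemma OD_dual_iff: "y \<in> OD_dual D \<longleftrightarrow> (\<exists>m k::int. y = (of_int k / 2, of_int m / of_int D + of_int k / 2))"
proof -
  have "km (0, 1 / of_int D) (of_int m + of_int k * of_int D / 2, of_int k / 2) =
        (of_int k / 2, of_int m / of_int D + of_int k / 2)" for m k :: int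
    using D_rat_nonzero by (simp add: kmul_def field_simps)
  thus ?thesis unfolding OD_dual_def OD_def mem_Collect_eq by metis
qed

lemma sqrtD_OD_iff:
  "b \<in> sqrtD_OD D \<longleftrightarrow> (\<exists>m k::int. b = (of_int D * of_int k / 2, of_int m + of_int k * of_int D / 2))"
proof -
  have "km ksqrt (of_int m + of_int k * of_int D / 2, of_int k / 2) =
        (of_int D * of_int k / 2, of_int m + of_int k * of_int D / 2)" for m k :: int
    by (simp add: kmul_def ksqrt_def)
  thus ?thesis unfolding sqrtD_OD_def OD_def mem_Collect_eq by metis
qed

text \<open>(D + sqrt D)/2 is a root of X^2 - D X + (D^2 - D)/4; the constant term is integral since D = 0, 1 mod 4.\<close>
lemma disc_quarter: "(of_int ((D * D - D) div 4) :: rat) = (of_int D * of_int D - of_int D) / 4"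
proof -
  obtain q where "D = 4 * q \<or> D = 4 * q + 1"
    using D_mod_4 by (metis add.commute add_0 div_mult_mod_eq mult.commute)
  hence "D * D - D = 4 * (D * q - q) \<or> D * D - D = 4 * (D * q)" by (auto simp: algebra_simps)
  then obtain e where "D * D - D = 4 * e" by blast
  thus ?thesis by (simp flip: of_int_mult of_int_diff)
qed

lemma OD_kmul: assumes "x \<in> OD D" "y \<in> OD D" shows "km x y \<in> OD D"
proof -
  obtain m k m' k' :: int where x: "x = (of_int m + of_int k * of_int D / 2, of_int k / 2)"
    and y: "y = (of_int m' + of_int k' * of_int D / 2, of_int k' / 2)" using assms OD_iff by meson
  show ?thesis unfolding OD_iff
    apply (rule exI[of _ "m * m' - (D * D - D) div 4 * k * k'"], rule exI[of _ "m * k' + k * m' + D * k * k'"])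
    unfolding x y kmul_def by (simp add: disc_quarter field_simps; simp add: algebra_simps)
qed

lemma OD_dual_kmul: assumes "x \<in> OD D" "y \<in> OD_dual D" shows "km x y \<in> OD_dual D"
proof -
  obtain m k m' k' :: int where x: "x = (of_int m + of_int k * of_int D / 2, of_int k / 2)"
    and y: "y = (of_int k' / 2, of_int m' / of_int D + of_int k' / 2)" using assms OD_iff OD_dual_iff by meson
  show ?thesis unfolding OD_dual_iff
    apply (rule exI[of _ "m * m' - (D * D - D) div 4 * k * k'"], rule exI[of _ "m * k' + k * m' + D * k * k'"])
    using D_rat_nonzero unfolding x y kmul_def by (simp add: disc_quarter field_simps; simp add: algebra_simps)
qed

lemma sqrtD_OD_kmul_OD_dual: assumes "b \<in> sqrtD_OD D" "y \<in> OD_dual D" shows "km b y \<in> OD D"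
proof -
  obtain m k m' k' :: int where b: "b = (of_int D * of_int k / 2, of_int m + of_int k * of_int D / 2)"
    and y: "y = (of_int k' / 2, of_int m' / of_int D + of_int k' / 2)" using assms sqrtD_OD_iff OD_dual_iff by meson
  show ?thesis unfolding OD_iff
    apply (rule exI[of _ "m * m' - (D * D - D) div 4 * k * k'"], rule exI[of _ "k * m' + m * k' + D * k * k'"])
    using D_rat_nonzero unfolding b y kmul_def by (simp add: disc_quarter field_simps; simp add: algebra_simps)
qed

lemma OD_kadd: "x \<in> OD D \<Longrightarrow> y \<in> OD D \<Longrightarrow> kadd x y \<in> OD D"
  unfolding OD_iff kadd_def
  by (elim exE, rename_tac m k m' k', rule_tac x = "m + m'" in exI, rule_tac x = "k + k'" in exI)
     (simp add: field_simps)

lemma OD_dual_kadd: "x \<in> OD_dual D \<Longrightarrow> y \<in> OD_dual D \<Longrightarrow> kadd x y \<in> OD_dual D"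
  unfolding OD_dual_iff kadd_def
  by (elim exE, rename_tac m k m' k', rule_tac x = "m + m'" in exI, rule_tac x = "k + k'" in exI)
     (use D_rat_nonzero in \<open>simp add: field_simps\<close>)

lemma OD_dual_neg: "x \<in> OD_dual D \<Longrightarrow> ksub kzero x \<in> OD_dual D"
  and sqrtD_OD_neg: "x \<in> sqrtD_OD D \<Longrightarrow> ksub kzero x \<in> sqrtD_OD D"
  unfolding OD_dual_iff sqrtD_OD_iff ksub_def kzero_def
  by (elim exE, rename_tac m k, rule_tac x = "- m" in exI, rule_tac x = "- k" in exI, simp add: field_simps)+

lemma OD_of_int: "(of_int i, 0) \<in> OD D"
  unfolding OD_iff by (rule exI[of _ i], rule exI[of _ 0]) simp

lemma OD_kone: "kone \<in> OD D" and OD_kzero: "kzero \<in> OD D"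
  using OD_of_int[of 1] OD_of_int[of 0] by (simp_all add: kone_def kzero_def)

lemma OD_sqrt: "(0, 1) \<in> OD D"
  unfolding OD_iff by (rule exI[of _ "- D"], rule exI[of _ 2]) simp

lemma OD_dual_kzero: "kzero \<in> OD_dual D" and sqrtD_OD_kzero: "kzero \<in> sqrtD_OD D"
  unfolding OD_dual_iff sqrtD_OD_iff kzero_def by (rule exI[of _ 0], rule exI[of _ 0], simp)+

lemma OD_dual_inverse_sqrt: "(0, 1 / of_int D) \<in> OD_dual D"
  unfolding OD_dual_iff by (rule exI[of _ 1], rule exI[of _ 0]) simp

lemma OD_dual_half: "(1/2, 1/2) \<in> OD_dual D"
  unfolding OD_dual_iff by (rule exI[of _ 0], rule exI[of _ 1]) simp

lemma int_denom_OD: "x \<in> OD D \<Longrightarrow> int_denom (2 * D) x"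
  unfolding OD_iff int_denom_def
proof (elim exE)
  fix m k assume x: "x = (of_int m + of_int k * of_int D / 2, of_int k / 2)"
  have "of_int (2 * D) * fst x = of_int (2 * D * m + k * D * D)" "of_int (2 * D) * snd x = of_int (D * k)"
    unfolding x by (simp_all add: field_simps)
  thus "of_int (2 * D) * fst x \<in> \<int> \<and> of_int (2 * D) * snd x \<in> \<int>" by (metis Ints_of_int)
qed

lemma int_denom_OD_dual: "x \<in> OD_dual D \<Longrightarrow> int_denom (2 * D) x"
  unfolding OD_dual_iff int_denom_def
proof (elim exE)
  fix m k assume x: "x = (of_int k / 2, of_int m / of_int D + of_int k / 2)"
  have "of_int (2 * D) * fst x = of_int (D * k)" "of_int (2 * D) * snd x = of_int (2 * m + D * k)"
    unfolding x using D_rat_nonzero by (simp_all add: field_simps)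
  thus "of_int (2 * D) * fst x \<in> \<int> \<and> of_int (2 * D) * snd x \<in> \<int>" by (metis Ints_of_int)
qed

definition kmat_apply :: "kmat \<Rightarrow> kd \<times> kd \<Rightarrow> kd \<times> kd" where
  "kmat_apply A u = (case A of (a, b, c, d) \<Rightarrow>
     (kadd (km a (fst u)) (km b (snd u)), kadd (km c (fst u)) (km d (snd u))))"

definition integral_kmat :: "kmat \<Rightarrow> bool" where
  "integral_kmat A \<longleftrightarrow> (case A of (a, b, c, d) \<Rightarrow>
     a \<in> OD D \<and> b \<in> sqrtD_OD D \<and> c \<in> OD_dual D \<and> d \<in> OD D)"

definition kdet :: "kmat \<Rightarrow> kd" where
  "kdet A = (case A of (a, b, c, d) \<Rightarrow> ksub (km a d) (km b c))"

lemma SL_Lambda_iff: "A \<in> SL_Lambda D \<longleftrightarrow> integral_kmat A \<and> kdet A = kone"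
  unfolding SL_Lambda_def integral_kmat_def kdet_def by (cases A) auto

lemma kmat_apply_LambdaD:
  assumes "integral_kmat A" "u \<in> LambdaD D" shows "kmat_apply A u \<in> LambdaD D"
proof -
  obtain a b c d where A: "A = (a, b, c, d)" by (cases A) auto
  obtain x y where u: "u = (x, y)" by (cases u)
  have "a \<in> OD D" "b \<in> sqrtD_OD D" "c \<in> OD_dual D" "d \<in> OD D" "x \<in> OD D" "y \<in> OD_dual D"
    using assms unfolding A u integral_kmat_def LambdaD_def by auto
  moreover have "km c x = km x c" by (rule kmul_commute)
  ultimately show ?thesis unfolding A u kmat_apply_def LambdaD_def
    using OD_kadd OD_kmul sqrtD_OD_kmul_OD_dual OD_dual_kadd OD_dual_kmul by auto
qed

lemma kd_pair_eqI: "sp (fst u) = sp (fst v) \<Longrightarrow> sp (snd u) = sp (snd v) \<Longrightarrow> u = v"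
  using kd_eqI by (metis prod.collapse)

lemma kmat_apply_mult: "kmat_apply (kmat_mult D A B) u = kmat_apply A (kmat_apply B u)"
proof -
  obtain a b c d where A: "A = (a, b, c, d)" by (cases A) auto
  obtain a' b' c' d' where B: "B = (a', b', c', d')" by (cases B) auto
  show ?thesis unfolding A B kmat_mult_def kmat_apply_def
    by (rule kd_pair_eqI) (simp_all add: algebra_simps)
qed

lemma kmat_apply_id: "kmat_apply kmat_id u = u"
  unfolding kmat_id_def kmat_apply_def by (rule kd_pair_eqI) simp_all

lemma kmat_eqI: assumes "\<And>u. kmat_apply A u = kmat_apply B u" shows "A = B"
proof -
  have "kmat_apply A (kone, kzero) = kmat_apply B (kone, kzero)"
       "kmat_apply A (kzero, kone) = kmat_apply B (kzero, kone)" using assms by auto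
  moreover obtain a b c d where "A = (a, b, c, d)" by (cases A) auto
  moreover obtain a' b' c' d' where "B = (a', b', c', d')" by (cases B) auto
  ultimately show ?thesis by (simp add: kmat_apply_def)
qed

lemma symp_kmat_apply:
  "symp D (kmat_apply A u) (kmat_apply A v) = ktrace (km (kdet A) (ksub (km (fst u) (snd v)) (km (fst v) (snd u))))"
proof -
  obtain a b c d where A: "A = (a, b, c, d)" by (cases A) auto
  show ?thesis unfolding symp_def A kmat_apply_def kdet_def
    by (rule arg_cong[of _ _ ktrace], rule kd_eqI) (simp add: algebra_simps)
qed

lemma symp_kmat_apply_adjugate:
  "symp D (kmat_apply (a, b, c, d) u) v = symp D u (kmat_apply (d, ksub kzero b, ksub kzero c, a) v)"
  unfolding symp_def kmat_apply_def by (rule arg_cong[of _ _ ktrace], rule kd_eqI) (simp add: algebra_simps)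

lemma phi_vec2: "phi D \<tau> u = vec2 (of_real (sp (fst u)) + of_real (sp (snd u)) * fst \<tau>)
                                (of_real (sm (fst u)) + of_real (sm (snd u)) * snd \<tau>)"
  by (simp add: phi_def vec2_def)

lemma iota_diag: "iota D \<tau> x = diag (of_real (sp x)) (of_real (sm x))"
  by (simp add: iota_def diag_def)

lemma sigp_affine_inj:
  assumes "of_real (sp x) + of_real (sp y) * fst \<tau> = of_real (sp x') + of_real (sp y') * fst \<tau>"
  shows "x = x' \<and> y = y'"
  using complex_affine_coeffs_eq[OF _ assms] Im_fst_pos sigp_inj by auto

lemma sigm_affine_inj:
  assumes "of_real (sm x) + of_real (sm y) * snd \<tau> = of_real (sm x') + of_real (sm y') * snd \<tau>"
  shows "x = x' \<and> y = y'"
  using complex_affine_coeffs_eq[OF _ assms] Im_snd_pos sigm_inj by auto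

lemma phi_inj: "phi D \<tau> u = phi D \<tau> v \<Longrightarrow> u = v"
  unfolding phi_vec2 vec2_eq_iff using sigp_affine_inj by (metis prod.collapse)

lemma phi_add: "phi D \<tau> u + phi D \<tau> v = phi D \<tau> (kadd (fst u) (fst v), kadd (snd u) (snd v))"
  unfolding phi_vec2 vec2_add by (simp add: algebra_simps)

lemma is_end_add: assumes "is_end D \<tau> M" "is_end D \<tau> N" shows "is_end D \<tau> (M + N)"
  unfolding is_end_def
proof
  fix p assume "p \<in> lattice D \<tau>"
  then obtain u v where "u \<in> LambdaD D" "v \<in> LambdaD D" "M *v p = phi D \<tau> u" "N *v p = phi D \<tau> v"
    using assms unfolding is_end_def lattice_def by blast
  moreover have "(kadd (fst u) (fst v), kadd (snd u) (snd v)) \<in> LambdaD D" if "u \<in> LambdaD D" "v \<in> LambdaD D"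
    using that OD_kadd OD_dual_kadd unfolding LambdaD_def by auto
  ultimately show "(M + N) *v p \<in> lattice D \<tau>"
    unfolding lattice_def by (auto simp: matrix_vector_mult_add_rdistrib phi_add)
qed

text \<open>
  diag z1 z2 acts on the lattice as A acts on Lambda_D: the vectors (1, tau_+) and (1, tau_-) are
  eigenvectors of the transposes of sigma_+(A) and sigma_-(A) with eigenvalues z1 and z2.\<close>
definition represents :: "complex \<Rightarrow> complex \<Rightarrow> kmat \<Rightarrow> bool" where
  "represents z1 z2 A \<longleftrightarrow> (case A of (a, b, c, d) \<Rightarrow>
     z1 = of_real (sp a) + of_real (sp c) * fst \<tau> \<and>
     z1 * fst \<tau> = of_real (sp b) + of_real (sp d) * fst \<tau> \<and>
     z2 = of_real (sm a) + of_real (sm c) * snd \<tau> \<and>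
     z2 * snd \<tau> = of_real (sm b) + of_real (sm d) * snd \<tau>)"

lemma diag_mult_phi:
  assumes "represents z1 z2 A"
  shows "diag z1 z2 *v phi D \<tau> u = phi D \<tau> (kmat_apply A u)"
proof -
  obtain a b c d where A: "A = (a, b, c, d)" by (cases A) auto
  have e: "z1 = of_real (sp a) + of_real (sp c) * fst \<tau>" "z1 * fst \<tau> = of_real (sp b) + of_real (sp d) * fst \<tau>"
    "z2 = of_real (sm a) + of_real (sm c) * snd \<tau>" "z2 * snd \<tau> = of_real (sm b) + of_real (sm d) * snd \<tau>"
    using assms unfolding represents_def A by auto
  show ?thesis unfolding phi_vec2 diag_mult_vec2 vec2_eq_iff A kmat_apply_def
    using eigen_mult_affine[OF e(1,2), of "of_real (sp (fst u))" "of_real (sp (snd u))"]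
      eigen_mult_affine[OF e(3,4), of "of_real (sm (fst u))" "of_real (sm (snd u))"]
    by (simp add: algebra_simps)
qed

lemma represents_unique: "represents z1 z2 A \<Longrightarrow> represents z1 z2 B \<Longrightarrow> A = B"
  by (rule kmat_eqI, rule phi_inj) (simp flip: diag_mult_phi)

lemma is_end_if_represents:
  assumes "integral_kmat A" "represents z1 z2 A" shows "is_end D \<tau> (diag z1 z2)"
  unfolding is_end_def lattice_def
  using diag_mult_phi[OF assms(2)] kmat_apply_LambdaD[OF assms(1)] by auto

lemma ksqrt_sqrtD_OD: "ksqrt \<in> sqrtD_OD D"
  unfolding sqrtD_OD_def mem_Collect_eq using OD_kone by (metis kmul_kone(1))

lemma represents_if_is_end:
  assumes "is_end D \<tau> (diag z1 z2)"
  obtains A where "integral_kmat A" "represents z1 z2 A"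
proof -
  define y0 :: kd where "y0 = (0, 1 / of_int D)"
  have s: "sp ksqrt * sp y0 = 1" "sm ksqrt * sm y0 = 1"
    using D_pos by (simp_all add: y0_def sigp_def sigm_def ksqrt_def of_rat_divide)
  have "(kone, kzero) \<in> LambdaD D" "(kzero, y0) \<in> LambdaD D"
    unfolding LambdaD_def y0_def using OD_kone OD_kzero OD_dual_kzero OD_dual_inverse_sqrt by auto
  hence "diag z1 z2 *v phi D \<tau> (kone, kzero) \<in> phi D \<tau> ` LambdaD D"
    "diag z1 z2 *v phi D \<tau> (kzero, y0) \<in> phi D \<tau> ` LambdaD D"
    using assms unfolding is_end_def lattice_def by auto
  then obtain u v where "u \<in> LambdaD D" "diag z1 z2 *v phi D \<tau> (kone, kzero) = phi D \<tau> u"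
    and "v \<in> LambdaD D" "diag z1 z2 *v phi D \<tau> (kzero, y0) = phi D \<tau> v"
    by blast
  moreover obtain a c b' d' where "u = (a, c)" "v = (b', d')" by (cases u, cases v)
  ultimately have ac: "(a, c) \<in> LambdaD D" "diag z1 z2 *v phi D \<tau> (kone, kzero) = phi D \<tau> (a, c)"
    and bd: "(b', d') \<in> LambdaD D" "diag z1 z2 *v phi D \<tau> (kzero, y0) = phi D \<tau> (b', d')"
    by simp_all
  define b where "b = km ksqrt b'"
  define d where "d = km ksqrt d'"
  have int: "integral_kmat (a, b, c, d)"
    using ac(1) bd(1) sqrtD_OD_kmul_OD_dual[OF ksqrt_sqrtD_OD, of d']
    unfolding integral_kmat_def LambdaD_def b_def d_def sqrtD_OD_def by (auto simp del: split_paired_Ex)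
  have col1: "z1 = of_real (sp a) + of_real (sp c) * fst \<tau>" "z2 = of_real (sm a) + of_real (sm c) * snd \<tau>"
    using ac(2) unfolding phi_vec2 diag_mult_vec2 vec2_eq_iff by auto
  have col2: "z1 * (of_real (sp y0) * fst \<tau>) = of_real (sp b') + of_real (sp d') * fst \<tau>"
    "z2 * (of_real (sm y0) * snd \<tau>) = of_real (sm b') + of_real (sm d') * snd \<tau>"
    using bd(2) unfolding phi_vec2 diag_mult_vec2 vec2_eq_iff by auto
  have rescale: "w * t = of_real r * (w * (of_real r' * t))" if "r * r' = 1" for w t :: complex and r r' :: real
  proof -
    have "of_real r * (w * (of_real r' * t)) = of_real (r * r') * (w * t)" by (simp add: algebra_simps)
    thus ?thesis using that by simp
  qed
  have "z1 * fst \<tau> = of_real (sp b) + of_real (sp d) * fst \<tau>"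
    "z2 * snd \<tau> = of_real (sm b) + of_real (sm d) * snd \<tau>"
    unfolding rescale[OF s(1), of z1 "fst \<tau>"] rescale[OF s(2), of z2 "snd \<tau>"] col2 b_def d_def
    by (simp_all add: algebra_simps)
  with int col1 show thesis using that unfolding represents_def by auto
qed

section \<open>Fixed points of SL(Lambda_D) and automorphisms of B_tau\<close>

lemma cmat_pow_diag_mult_phi:
  assumes "represents z1 z2 A"
  shows "cmat_pow (diag z1 z2) k *v phi D \<tau> u = phi D \<tau> (kmat_apply (kmat_pow D A k) u)"
proof (induction k arbitrary: u)
  case 0 thus ?case by (simp add: kmat_apply_id)
next
  case (Suc k)
  have "cmat_pow (diag z1 z2) (Suc k) *v phi D \<tau> u = diag z1 z2 *v (cmat_pow (diag z1 z2) k *v phi D \<tau> u)"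
    by (simp add: matrix_vector_mul_assoc)
  thus ?case using Suc diag_mult_phi[OF assms] by (simp add: kmat_apply_mult)
qed

text \<open>Either eigenvalue alone determines the powers of A, since each coordinate of phi_tau is injective.\<close>
lemma kmat_pow_eq_id_iff:
  assumes "represents z1 z2 A"
  shows "kmat_pow D A k = kmat_id \<longleftrightarrow> z1 ^ k = 1" and "kmat_pow D A k = kmat_id \<longleftrightarrow> z2 ^ k = 1"
proof -
  let ?B = "kmat_pow D A k"
  have coords: "z1 ^ k * (of_real (sp (fst u)) + of_real (sp (snd u)) * fst \<tau>) =
      of_real (sp (fst (kmat_apply ?B u))) + of_real (sp (snd (kmat_apply ?B u))) * fst \<tau>"
    "z2 ^ k * (of_real (sm (fst u)) + of_real (sm (snd u)) * snd \<tau>) =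
      of_real (sm (fst (kmat_apply ?B u))) + of_real (sm (snd (kmat_apply ?B u))) * snd \<tau>" for u
    using cmat_pow_diag_mult_phi[OF assms, of k u]
    unfolding cmat_pow_diag phi_vec2 diag_mult_vec2 vec2_eq_iff by auto
  have "?B = kmat_id" if "\<And>u. kmat_apply ?B u = u"
    using that by (intro kmat_eqI) (simp add: kmat_apply_id)
  moreover have "z1 ^ k = 1 \<and> z2 ^ k = 1" if "?B = kmat_id"
    using coords[of "(kone, kzero)"] that by (simp add: kmat_apply_id)
  ultimately show "?B = kmat_id \<longleftrightarrow> z1 ^ k = 1" "?B = kmat_id \<longleftrightarrow> z2 ^ k = 1"
    using coords sigp_affine_inj sigm_affine_inj by (metis mult_1 prod.collapse)+
qed

lemma cmat_order_diag_iff: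
  assumes "represents z1 z2 A"
  shows "cmat_order (diag z1 z2) n \<longleftrightarrow> kmat_order D A n"
proof -
  have "cmat_pow (diag z1 z2) k = mat 1 \<longleftrightarrow> kmat_pow D A k = kmat_id" for k
    using kmat_pow_eq_id_iff[OF assms] by (simp add: cmat_pow_diag mat_1_eq_diag diag_eq_iff)
  thus ?thesis unfolding cmat_order_def kmat_order_def by simp
qed

lemma primitive_root_if_cmat_order:
  assumes "represents z1 z2 A" "cmat_order (diag z1 z2) n"
  shows "primitive_root n z1"
  using assms(2) kmat_pow_eq_id_iff[OF assms(1)]
  unfolding cmat_order_def primitive_root_def cmat_pow_diag mat_1_eq_diag diag_eq_iff by metis

lemma sigp_kdet: "sp (kdet (a, b, c, d)) = sp a * sp d - sp b * sp c"
  and sigm_kdet: "sm (kdet (a, b, c, d)) = sm a * sm d - sm b * sm c"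
  by (simp_all add: kdet_def)

lemma symp_kmat_apply_SL: "kdet A = kone \<Longrightarrow> symp D (kmat_apply A u) (kmat_apply A v) = symp D u v"
  unfolding symp_kmat_apply by (simp add: symp_def)

text \<open>Pairing (1,0) and (0,y) for y in O_D^dual gives Tr(det A y) = Tr(y); y = 1/sqrt D and y = 1/2 + 1/2 sqrt D
  then force det A = 1.\<close>
lemma kdet_eq_kone_if_symp_preserved:
  assumes A: "integral_kmat A"
    and symp: "\<And>u v. u \<in> LambdaD D \<Longrightarrow> v \<in> LambdaD D \<Longrightarrow> symp D (kmat_apply A u) (kmat_apply A v) = symp D u v"
  shows "kdet A = kone"
proof -
  have tr: "ktrace (km (kdet A) y) = ktrace y" if y: "y \<in> OD_dual D" for y
  proof -
    have "(kone, kzero) \<in> LambdaD D" "(kzero, y) \<in> LambdaD D"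
      unfolding LambdaD_def using OD_kone OD_kzero OD_dual_kzero y by auto
    from symp[OF this] show ?thesis unfolding symp_kmat_apply by (simp add: symp_def)
  qed
  obtain p q where pq: "kdet A = (p, q)" by (cases "kdet A")
  have "q = 0" using tr[OF OD_dual_inverse_sqrt] D_rat_nonzero by (simp add: pq ktrace_def kmul_def)
  moreover have "p = 1" using tr[OF OD_dual_half] \<open>q = 0\<close> by (simp add: pq ktrace_def kmul_def)
  ultimately show ?thesis using pq by (simp add: kone_def)
qed

lemma automorphy_factor_nonzero:
  assumes "kdet (a, b, c, d) = kone"
  shows "(of_real (sp a) + of_real (sp c) * fst \<tau> :: complex) \<noteq> 0"
    and "(of_real (sm a) + of_real (sm c) * snd \<tau> :: complex) \<noteq> 0"
  using complex_affine_coeffs_eq[of "fst \<tau>" "sp a" "sp c" 0 0] complex_affine_coeffs_eq[of "snd \<tau>" "sm a" "sm c" 0 0]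
    Im_fst_pos Im_snd_pos arg_cong[OF assms, of sp] arg_cong[OF assms, of sm]
  by (auto simp: sigp_kdet sigm_kdet)

lemma sl_act_fixed_iff:
  assumes "kdet (a, b, c, d) = kone"
  shows "sl_act D (a, b, c, d) \<tau> = \<tau> \<longleftrightarrow>
    represents (of_real (sp a) + of_real (sp c) * fst \<tau>) (of_real (sm a) + of_real (sm c) * snd \<tau>) (a, b, c, d)"
proof -
  note nz = automorphy_factor_nonzero[OF assms]
  have "sl_act D (a, b, c, d) \<tau> = \<tau> \<longleftrightarrow>
     ((of_real (sp d) * fst \<tau> + of_real (sp b)) / (of_real (sp a) + of_real (sp c) * fst \<tau>) = fst \<tau> \<and>
      (of_real (sm d) * snd \<tau> + of_real (sm b)) / (of_real (sm a) + of_real (sm c) * snd \<tau>) = snd \<tau>)"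
    unfolding sl_act_def by (cases \<tau>) (auto simp: add.commute)
  also have "\<dots> \<longleftrightarrow> represents (of_real (sp a) + of_real (sp c) * fst \<tau>) (of_real (sm a) + of_real (sm c) * snd \<tau>) (a, b, c, d)"
    using nz unfolding represents_def by (auto simp: divide_eq_eq algebra_simps)
  finally show ?thesis .
qed

text \<open>The inverse automorphism is represented by the adjugate matrix.\<close>
lemma ppav_aut_diag_if_represents:
  assumes A: "integral_kmat (a, b, c, d)" "kdet (a, b, c, d) = kone" and rep: "represents z1 z2 (a, b, c, d)"
  shows "ppav_aut D \<tau> (diag z1 z2)"
proof -
  have e: "z1 = of_real (sp a) + of_real (sp c) * fst \<tau>" "z1 * fst \<tau> = of_real (sp b) + of_real (sp d) * fst \<tau>"
     "z2 = of_real (sm a) + of_real (sm c) * snd \<tau>" "z2 * snd \<tau> = of_real (sm b) + of_real (sm d) * snd \<tau>"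
    using rep unfolding represents_def by auto
  have det: "of_real (sp a) * of_real (sp d) - of_real (sp b) * of_real (sp c) = (1::complex)"
    "of_real (sm a) * of_real (sm d) - of_real (sm b) * of_real (sm c) = (1::complex)"
    using arg_cong[OF A(2), of sp] arg_cong[OF A(2), of sm] unfolding sigp_kdet sigm_kdet
    by (simp_all flip: of_real_mult of_real_diff)
  have nz: "z1 \<noteq> 0" "z2 \<noteq> 0" using automorphy_factor_nonzero[OF A(2)] e by simp_all
  have "represents (1 / z1) (1 / z2) (d, ksub kzero b, ksub kzero c, a)"
    unfolding represents_def using eigen_inverse[OF e(1,2) det(1)] eigen_inverse[OF e(3,4) det(2)] nz
    by (simp add: field_simps; simp add: algebra_simps)
  moreover have "integral_kmat (d, ksub kzero b, ksub kzero c, a)"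
    using A(1) sqrtD_OD_neg OD_dual_neg unfolding integral_kmat_def by auto
  ultimately have "is_end D \<tau> (diag (1 / z1) (1 / z2))" by (rule is_end_if_represents[rotated])
  moreover have "diag z1 z2 ** diag (1 / z1) (1 / z2) = mat 1" "diag (1 / z1) (1 / z2) ** diag z1 z2 = mat 1"
    using nz by (simp_all add: diag_mult mat_1_eq_diag)
  moreover have "symp D u' v' = symp D u v"
    if "diag z1 z2 *v phi D \<tau> u = phi D \<tau> u'" "diag z1 z2 *v phi D \<tau> v = phi D \<tau> v'" for u v u' v'
    using that diag_mult_phi[OF rep] phi_inj symp_kmat_apply_SL[OF A(2)] by metis
  ultimately show ?thesis unfolding ppav_aut_def using is_end_if_represents[OF A(1) rep] by blast
qed

lemma commuting_aut_of_fixing_element: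
  assumes A: "A \<in> SL_Lambda D" "kmat_order D A n" "sl_act D A \<tau> = \<tau>"
  shows "\<exists>M. ppav_aut D \<tau> M \<and> cmat_order M n \<and> (\<forall>x \<in> OD D. M ** iota D \<tau> x = iota D \<tau> x ** M)"
proof -
  obtain a b c d where Ad: "A = (a, b, c, d)" by (cases A) auto
  have int: "integral_kmat A" and det: "kdet A = kone" using A(1) SL_Lambda_iff by auto
  define M where "M = diag (of_real (sp a) + of_real (sp c) * fst \<tau>) (of_real (sm a) + of_real (sm c) * snd \<tau>)"
  have rep: "represents (of_real (sp a) + of_real (sp c) * fst \<tau>) (of_real (sm a) + of_real (sm c) * snd \<tau>) A"
    using sl_act_fixed_iff[OF det[unfolded Ad]] A(3) Ad by simp
  have "ppav_aut D \<tau> M" unfolding M_def using ppav_aut_diag_if_represents int det rep Ad by simp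
  moreover have "cmat_order M n" unfolding M_def using cmat_order_diag_iff[OF rep] A(2) by simp
  moreover have "\<forall>x \<in> OD D. M ** iota D \<tau> x = iota D \<tau> x ** M"
    unfolding M_def by (simp add: iota_diag diag_mult mult.commute)
  ultimately show ?thesis by blast
qed

text \<open>Commuting with iota_tau(sqrt D), whose eigenvalues \<plusminus>sqrt D differ, forces M to be diagonal.\<close>
lemma represents_commuting_aut:
  assumes M: "ppav_aut D \<tau> M" "\<forall>x \<in> OD D. M ** iota D \<tau> x = iota D \<tau> x ** M"
  obtains A where "A \<in> SL_Lambda D" "represents (M$1$1) (M$2$2) A" "M = diag (M$1$1) (M$2$2)"
proof -
  have "M ** iota D \<tau> (0, 1) = iota D \<tau> (0, 1) ** M" using M(2) OD_sqrt by blast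
  moreover have "(of_real (sp (0, 1)) :: complex) \<noteq> of_real (sm (0, 1))"
    using D_pos by (simp add: sigp_sqrt sigm_sqrt)
  ultimately have Md: "M = diag (M$1$1) (M$2$2)" using commute_diag_imp_diag by (simp add: iota_diag)
  have "is_end D \<tau> M" using M(1) unfolding ppav_aut_def by auto
  then obtain A where int: "integral_kmat A" and rep: "represents (M$1$1) (M$2$2) A"
    using represents_if_is_end Md by metis
  have "kdet A = kone"
  proof (rule kdet_eq_kone_if_symp_preserved[OF int])
    fix u v assume "u \<in> LambdaD D" "v \<in> LambdaD D"
    moreover have "M *v phi D \<tau> w = phi D \<tau> (kmat_apply A w)" for w
      using diag_mult_phi[OF rep] Md by metis
    ultimately show "symp D (kmat_apply A u) (kmat_apply A v) = symp D u v"
      using M(1) kmat_apply_LambdaD[OF int] unfolding ppav_aut_def by blast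
  qed
  thus thesis using that int rep Md SL_Lambda_iff by blast
qed

lemma fixing_element_of_commuting_aut:
  assumes M: "ppav_aut D \<tau> M" "cmat_order M n" "\<forall>x \<in> OD D. M ** iota D \<tau> x = iota D \<tau> x ** M"
  shows "\<exists>A \<in> SL_Lambda D. kmat_order D A n \<and> sl_act D A \<tau> = \<tau>"
proof -
  obtain A where A: "A \<in> SL_Lambda D" and rep: "represents (M$1$1) (M$2$2) A" and Md: "M = diag (M$1$1) (M$2$2)"
    using represents_commuting_aut[OF M(1,3)] by blast
  obtain a b c d where Ad: "A = (a, b, c, d)" by (cases A) auto
  have "kdet A = kone" using A SL_Lambda_iff by simp
  moreover have "M$1$1 = of_real (sp a) + of_real (sp c) * fst \<tau>" "M$2$2 = of_real (sm a) + of_real (sm c) * snd \<tau>"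
    using rep unfolding represents_def Ad by auto
  ultimately have "sl_act D A \<tau> = \<tau>" using sl_act_fixed_iff rep Ad by simp
  moreover have "kmat_order D A n" using cmat_order_diag_iff[OF rep] M(2) Md by simp
  ultimately show ?thesis using A by blast
qed

end

section \<open>Complex multiplication by K_D(alpha)\<close>

locale diagonal_aut = hilbert_point +
  fixes n :: nat and \<alpha> \<beta> :: complex and a b c d :: kd
  assumes n_gt_2: "n > 2"
    and SL: "(a, b, c, d) \<in> SL_Lambda D"
    and rep: "represents \<alpha> \<beta> (a, b, c, d)"
    and order: "cmat_order (diag \<alpha> \<beta>) n"
begin

definition "tr = kadd a d"

lemma integral_A: "integral_kmat (a, b, c, d)" and kdet_A: "kdet (a, b, c, d) = kone"
  using SL SL_Lambda_iff by auto

lemma eigen_eqs: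
  "\<alpha> = of_real (sp a) + of_real (sp c) * fst \<tau>" "\<alpha> * fst \<tau> = of_real (sp b) + of_real (sp d) * fst \<tau>"
  "\<beta> = of_real (sm a) + of_real (sm c) * snd \<tau>" "\<beta> * snd \<tau> = of_real (sm b) + of_real (sm d) * snd \<tau>"
  using rep unfolding represents_def by auto

lemma eigen_quadratic_eqs: "\<alpha> * \<alpha> = of_real (sp tr) * \<alpha> - 1" "\<beta> * \<beta> = of_real (sm tr) * \<beta> - 1"
proof -
  have "of_real (sp a) * of_real (sp d) - of_real (sp b) * of_real (sp c) = (1::complex)"
    "of_real (sm a) * of_real (sm d) - of_real (sm b) * of_real (sm c) = (1::complex)"
    using arg_cong[OF kdet_A, of sp] arg_cong[OF kdet_A, of sm] unfolding sigp_kdet sigm_kdet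
    by (simp_all flip: of_real_mult of_real_diff)
  thus "\<alpha> * \<alpha> = of_real (sp tr) * \<alpha> - 1" "\<beta> * \<beta> = of_real (sm tr) * \<beta> - 1"
    using eigen_quadratic[OF eigen_eqs(1,2)] eigen_quadratic[OF eigen_eqs(3,4)] by (simp_all add: tr_def)
qed

lemma primitive_root_alpha: "primitive_root n \<alpha>"
  by (rule primitive_root_if_cmat_order[OF rep order])

lemma alpha_pow_n: "\<alpha> ^ n = 1" and alpha_square_neq_1: "\<alpha>\<^sup>2 \<noteq> 1"
  using primitive_root_alpha n_gt_2 unfolding primitive_root_def by auto

lemma Im_alpha_nonzero: "Im \<alpha> \<noteq> 0"
  using real_root_of_unity_square[OF alpha_pow_n] n_gt_2 alpha_square_neq_1 complex_is_Real_iff by auto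

text \<open>Since |alpha| = 1 and alpha (tr - alpha) = 1.\<close>
lemma cnj_alpha: "cnj \<alpha> = of_real (sp tr) - \<alpha>"
proof -
  have "cnj \<alpha> * \<alpha> = 1" using cnj_mult_root_of_unity[OF alpha_pow_n] n_gt_2 by simp
  moreover have "(of_real (sp tr) - \<alpha>) * \<alpha> = 1" using eigen_quadratic_eqs(1) by (simp add: algebra_simps)
  moreover have "\<alpha> \<noteq> 0" using Im_alpha_nonzero by auto
  ultimately show ?thesis by (metis mult_cancel_right)
qed

definition emb :: "kd \<Rightarrow> kd \<Rightarrow> complex" where
  "emb p q = of_real (sp p) + of_real (sp q) * \<alpha>"

text \<open>The conjugate embedding of K_D(alpha), sending sqrt D to -sqrt D and alpha to beta.\<close>
definition emb' :: "kd \<Rightarrow> kd \<Rightarrow> complex" where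
  "emb' p q = of_real (sm p) + of_real (sm q) * \<beta>"

lemma emb_inj: "emb p q = emb p' q' \<Longrightarrow> p = p' \<and> q = q'"
  unfolding emb_def using complex_affine_coeffs_eq[OF Im_alpha_nonzero] sigp_inj by blast

lemma emb_add: "emb p q + emb p' q' = emb (kadd p p') (kadd q q')"
  and emb'_add: "emb' p q + emb' p' q' = emb' (kadd p p') (kadd q q')"
  unfolding emb_def emb'_def by (simp_all add: algebra_simps)

lemma emb_mult: "emb p q * emb p' q' = emb (ksub (km p p') (km q q')) (kadd (kadd (km p q') (km q p')) (km (km q q') tr))"
  and emb'_mult: "emb' p q * emb' p' q' = emb' (ksub (km p p') (km q q')) (kadd (kadd (km p q') (km q p')) (km (km q q') tr))"
  unfolding emb_def emb'_def quadratic_mult[OF eigen_quadratic_eqs(1)] quadratic_mult[OF eigen_quadratic_eqs(2)]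
  by simp_all

lemma emb_kzero: "emb x kzero = of_real (sp x)" and emb'_kzero: "emb' x kzero = of_real (sm x)"
  unfolding emb_def emb'_def by simp_all

lemma emb_alpha: "emb kzero kone = \<alpha>"
  unfolding emb_def by simp

lemma cnj_emb: "cnj (emb p q) = emb (kadd p (km q tr)) (ksub kzero q)"
  unfolding emb_def by (simp add: cnj_alpha algebra_simps)

definition K_alpha :: "complex set" where
  "K_alpha = {of_real (sp p) + of_real (sp q) * \<alpha> | p q. True}"

lemma K_alpha_iff: "z \<in> K_alpha \<longleftrightarrow> (\<exists>p q. z = emb p q)"
  unfolding K_alpha_def emb_def by auto

lemma emb_K_alpha [simp]: "emb p q \<in> K_alpha"
  using K_alpha_iff by blast

lemma kinverse_exists: assumes "r \<noteq> kzero" obtains s where "km r s = kone"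
proof -
  define N where "N = fst r * fst r - of_int D * snd r * snd r"
  have N: "km r (fst r, - snd r) = (N, 0)" unfolding N_def by (simp add: kmul_def)
  have "sp (km r (fst r, - snd r)) = sp r * sm r"
    by (simp only: sigp_kmul) (simp add: sigp_def sigm_def of_rat_minus)
  hence "real_of_rat N = sp r * sm r" unfolding N by simp
  hence "N \<noteq> 0" using assms sigp_eq_0_iff[of r] sigm_eq_0_iff[of r] by auto
  have "sp (km r (km (fst r, - snd r) (1 / N, 0))) = sp (km r (fst r, - snd r)) * real_of_rat (1 / N)"
    by simp
  also have "\<dots> = 1" using \<open>N \<noteq> 0\<close> unfolding N by (simp add: of_rat_divide)
  finally have "km r (km (fst r, - snd r) (1 / N, 0)) = kone" by (intro kd_eqI) (simp only: sigp_kone)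
  thus thesis by (rule that)
qed

text \<open>The inverse of x is cnj x / (x cnj x), and x cnj x lies in K_D since it is real.\<close>
lemma subfield_K_alpha: "subfield_C K_alpha"
  unfolding subfield_C_def
proof (intro conjI ballI)
  show "0 \<in> K_alpha" "1 \<in> K_alpha" using emb_kzero[of kzero] emb_kzero[of kone] emb_K_alpha by (metis sigp_kzero of_real_0, metis sigp_kone of_real_1)
  fix x assume "x \<in> K_alpha"
  then obtain p q where x: "x = emb p q" using K_alpha_iff by blast
  show "- x \<in> K_alpha" using emb_K_alpha[of "ksub kzero p" "ksub kzero q"] unfolding x emb_def by simp
  show "x + y \<in> K_alpha" "x * y \<in> K_alpha" if "y \<in> K_alpha" for y
  proof -
    obtain p' q' where "y = emb p' q'" using \<open>y \<in> K_alpha\<close> K_alpha_iff by blast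
    thus "x + y \<in> K_alpha" "x * y \<in> K_alpha" by (simp_all add: x emb_add emb_mult)
  qed
  show "inverse x \<in> K_alpha"
  proof (cases "x = 0")
    case False
    obtain r s where rs: "x * cnj x = emb r s"
      using emb_mult[of p q "kadd p (km q tr)" "ksub kzero q"] unfolding x cnj_emb by blast
    have "sp s * Im \<alpha> = Im (x * cnj x)" unfolding rs emb_def by simp
    hence "s = kzero" using Im_alpha_nonzero sigp_eq_0_iff by simp
    hence r: "x * cnj x = of_real (sp r)" unfolding rs emb_def by simp
    hence "r \<noteq> kzero" using False by auto
    then obtain r' where "km r r' = kone" by (rule kinverse_exists)
    hence "x * (cnj x * of_real (sp r')) = 1"
      using r by (simp add: mult.assoc[symmetric] flip: of_real_mult sigp_kmul)
    hence "inverse x = cnj x * emb r' kzero" by (simp add: emb_kzero inverse_unique)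
    thus ?thesis unfolding x cnj_emb emb_mult by simp
  qed (simp add: \<open>0 \<in> K_alpha\<close>)
qed

definition rho :: "complex \<Rightarrow> cmat" where
  "rho z = diag z (THE w. \<exists>p q. z = emb p q \<and> w = emb' p q)"

lemma rho_emb: "rho (emb p q) = diag (emb p q) (emb' p q)"
proof -
  have "(THE w. \<exists>p' q'. emb p q = emb p' q' \<and> w = emb' p' q') = emb' p q"
    by (rule the_equality) (use emb_inj in blast)+
  thus ?thesis unfolding rho_def by simp
qed

lemma rho_add: "z \<in> K_alpha \<Longrightarrow> w \<in> K_alpha \<Longrightarrow> rho (z + w) = rho z + rho w"
  and rho_mult: "z \<in> K_alpha \<Longrightarrow> w \<in> K_alpha \<Longrightarrow> rho (z * w) = rho z ** rho w"
  unfolding K_alpha_iff by (auto simp: emb_add emb'_add emb_mult emb'_mult rho_emb diag_add diag_mult)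

lemma rho_of_real: "rho (of_real (sp x)) = iota D \<tau> x"
  using rho_emb[of x kzero] by (simp add: emb_kzero emb'_kzero iota_diag)

lemma rho_one: "rho 1 = mat 1"
  using rho_of_real[of kone] by (simp add: iota_diag mat_1_eq_diag)

text \<open>p + q alpha acts on the lattice as the matrix p + q A.\<close>
definition lin_A :: "kd \<Rightarrow> kd \<Rightarrow> kmat" where
  "lin_A p q = (kadd p (km q a), km q b, km q c, kadd p (km q d))"

lemma represents_emb: "represents (emb p q) (emb' p q) (lin_A p q)"
  unfolding represents_def lin_A_def emb_def emb'_def
  using eigen_shift[OF eigen_eqs(1,2), of "of_real (sp p)" "of_real (sp q)"]
    eigen_shift[OF eigen_eqs(3,4), of "of_real (sm p)" "of_real (sm q)"]
  by simp

definition stab_order :: "complex set" where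
  "stab_order = {z \<in> K_alpha. is_end D \<tau> (rho z)}"

lemma emb_stab_order_iff: "emb p q \<in> stab_order \<longleftrightarrow> integral_kmat (lin_A p q)"
proof
  assume "emb p q \<in> stab_order"
  hence "is_end D \<tau> (diag (emb p q) (emb' p q))" by (simp add: stab_order_def rho_emb)
  then obtain A where "integral_kmat A" "represents (emb p q) (emb' p q) A" by (rule represents_if_is_end)
  thus "integral_kmat (lin_A p q)" using represents_unique represents_emb by metis
next
  assume "integral_kmat (lin_A p q)"
  hence "is_end D \<tau> (diag (emb p q) (emb' p q))" using is_end_if_represents represents_emb by blast
  thus "emb p q \<in> stab_order" by (simp add: stab_order_def rho_emb)
qed

lemma stab_order_subset: "stab_order \<subseteq> K_alpha"
  unfolding stab_order_def by auto

lemma stab_order_add: "z \<in> stab_order \<Longrightarrow> w \<in> stab_order \<Longrightarrow> z + w \<in> stab_order"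
  and stab_order_mult: "z \<in> stab_order \<Longrightarrow> w \<in> stab_order \<Longrightarrow> z * w \<in> stab_order"
  using subfield_K_alpha rho_add rho_mult is_end_add unfolding stab_order_def subfield_C_def
  by (auto simp: is_end_def matrix_vector_mul_assoc[symmetric])

lemma stab_order_of_real: "x \<in> OD D \<Longrightarrow> of_real (sp x) \<in> stab_order"
  using emb_stab_order_iff[of x kzero] sqrtD_OD_kzero OD_dual_kzero
  by (simp add: emb_kzero lin_A_def integral_kmat_def)

lemma stab_order_one: "1 \<in> stab_order"
  using stab_order_of_real[OF OD_kone] by simp

lemma stab_order_of_int: "of_int k \<in> stab_order"
  using stab_order_of_real[OF OD_of_int] by simp

lemma stab_order_alpha: "\<alpha> \<in> stab_order"
  using emb_stab_order_iff[of kzero kone] integral_A by (simp add: emb_alpha lin_A_def)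

lemma stab_order_of_int_mult: "z \<in> stab_order \<Longrightarrow> of_int k * z \<in> stab_order"
  using stab_order_mult stab_order_of_int by blast

lemma stab_order_uminus: "z \<in> stab_order \<Longrightarrow> - z \<in> stab_order"
  using stab_order_of_int_mult[of z "- 1"] by simp

lemma stab_order_zero: "0 \<in> stab_order"
  using stab_order_of_int[of 0] by simp

text \<open>Complex conjugation corresponds to passing from p + q A to its adjugate.\<close>
lemma lin_A_cnj:
  "lin_A (kadd p (km q tr)) (ksub kzero q) = (kadd p (km q d), ksub kzero (km q b), ksub kzero (km q c), kadd p (km q a))"
  unfolding lin_A_def tr_def by (simp, intro conjI; rule kd_eqI; simp add: algebra_simps)

lemma stab_order_cnj: "z \<in> stab_order \<Longrightarrow> cnj z \<in> stab_order"
proof -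
  assume z: "z \<in> stab_order"
  then obtain p q where pq: "z = emb p q" using stab_order_subset K_alpha_iff by blast
  hence "integral_kmat (lin_A p q)" using z emb_stab_order_iff by blast
  hence "integral_kmat (lin_A (kadd p (km q tr)) (ksub kzero q))"
    unfolding lin_A_cnj unfolding lin_A_def integral_kmat_def using sqrtD_OD_neg OD_dual_neg by auto
  thus ?thesis unfolding pq cnj_emb emb_stab_order_iff .
qed

lemma rosati_cnj:
  assumes "z \<in> stab_order" "rho z *v phi D \<tau> u = phi D \<tau> u'" "rho (cnj z) *v phi D \<tau> v = phi D \<tau> v'"
  shows "symp D u' v = symp D u v'"
proof -
  obtain p q where z: "z = emb p q" using assms(1) stab_order_subset K_alpha_iff by blast
  have "u' = kmat_apply (lin_A p q) u"
    using assms(2) diag_mult_phi[OF represents_emb] phi_inj unfolding z rho_emb by metis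
  moreover have "v' = kmat_apply (lin_A (kadd p (km q tr)) (ksub kzero q)) v"
    using assms(3) diag_mult_phi[OF represents_emb] phi_inj unfolding z rho_emb cnj_emb by metis
  ultimately show ?thesis unfolding lin_A_cnj by (simp add: lin_A_def symp_kmat_apply_adjugate)
qed

text \<open>If p + q A is integral then q c lies in O_D^dual with c \<noteq> 0 (alpha is not real), and p = (p + q a) - q a.\<close>
lemma stab_order_denom_bound: obtains N where "N > 0" "\<And>p q. emb p q \<in> stab_order \<Longrightarrow> int_denom N p \<and> int_denom N q"
proof -
  have "c \<noteq> kzero" using eigen_eqs(1) Im_alpha_nonzero by auto
  then obtain c' where cc': "km c c' = kone" by (rule kinverse_exists)
  obtain Nc where Nc: "Nc > 0" "int_denom Nc c'" using int_denom_exists by blast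
  obtain Na where Na: "Na > 0" "int_denom Na a" using int_denom_exists by blast
  define N where "N = 2 * D * Nc * Na"
  have "int_denom N p \<and> int_denom N q" if "emb p q \<in> stab_order" for p q
  proof -
    have "km q c \<in> OD_dual D" "kadd p (km q a) \<in> OD D"
      using that emb_stab_order_iff unfolding lin_A_def integral_kmat_def by auto
    moreover have "q = km (km q c) c'"
    proof (rule kd_eqI)
      have "sp c * sp c' = 1" using arg_cong[OF cc', of sp] by simp
      thus "sp q = sp (km (km q c) c')" by (simp add: mult.assoc)
    qed
    ultimately have q: "int_denom (2 * D * Nc) q" using int_denom_kmul int_denom_OD_dual Nc(2) by metis
    hence "int_denom N q" "int_denom N (km q a)"
      using int_denom_dvd[OF q] int_denom_kmul[OF q Na(2)] unfolding N_def by simp_all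
    have "int_denom N (kadd p (km q a))"
      using int_denom_dvd int_denom_OD \<open>kadd p (km q a) \<in> OD D\<close> unfolding N_def by (metis dvd_mult2 dvd_refl)
    moreover have "p = ksub (kadd p (km q a)) (km q a)" by (rule kd_eqI) simp
    ultimately show ?thesis using \<open>int_denom N q\<close> \<open>int_denom N (km q a)\<close> int_denom_ksub by metis
  qed
  moreover have "N > 0" unfolding N_def using Nc Na D_pos by simp
  ultimately show thesis using that by blast
qed

lemma emb_of_int: "emb (of_int i1, of_int i2) (of_int i3, of_int i4) =
   of_int i1 + of_int i2 * of_real (sp (0, 1)) + of_int i3 * \<alpha> + of_int i4 * (of_real (sp (0, 1)) * \<alpha>)"
  unfolding emb_def by (simp add: sigp_def algebra_simps)

lemma stab_order_emb_of_int: "emb (of_int i1, of_int i2) (of_int i3, of_int i4) \<in> stab_order"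
  unfolding emb_of_int using stab_order_of_real[OF OD_sqrt] stab_order_alpha
  by (intro stab_order_add stab_order_mult stab_order_of_int_mult stab_order_of_int)

lemma emb_of_int_mult: "of_int N * emb (p1, p2) (q1, q2) = emb (of_int N * p1, of_int N * p2) (of_int N * q1, of_int N * q2)"
  unfolding emb_def by (simp add: sigp_def of_rat_mult algebra_simps)

lemma stab_order_spans: assumes "x \<in> K_alpha" shows "\<exists>m::int. m > 0 \<and> of_int m * x \<in> stab_order"
proof -
  obtain p1 p2 q1 q2 where x: "x = emb (p1, p2) (q1, q2)" using assms K_alpha_iff by (metis prod.collapse)
  obtain N1 N2 where N: "N1 > 0" "int_denom N1 (p1, p2)" "N2 > 0" "int_denom N2 (q1, q2)"
    using int_denom_exists by meson
  hence "int_denom (N1 * N2) (p1, p2)" "int_denom (N1 * N2) (q1, q2)" using int_denom_dvd by auto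
  then obtain i1 i2 i3 i4 where "of_int (N1 * N2) * p1 = of_int i1" "of_int (N1 * N2) * p2 = of_int i2"
     "of_int (N1 * N2) * q1 = of_int i3" "of_int (N1 * N2) * q2 = of_int i4"
    unfolding int_denom_def by (auto elim!: Ints_cases)
  hence "of_int (N1 * N2) * x = emb (of_int i1, of_int i2) (of_int i3, of_int i4)"
    unfolding x emb_of_int_mult by simp
  thus ?thesis using stab_order_emb_of_int N by (intro exI[of _ "N1 * N2"]) simp
qed

text \<open>
  With N a common denominator, every element is an integral combination of 1, sqrt D, alpha, sqrt D alpha
  and an element with coordinates in [0, 1) \<inter> (1/N) Z, of which there are finitely many.\<close>
lemma stab_order_finitely_generated: "\<exists>S. finite S \<and> S \<subseteq> stab_order \<and> stab_order = int_span S"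
proof -
  obtain N where N: "N > 0" and denom: "\<And>p q. emb p q \<in> stab_order \<Longrightarrow> int_denom N p \<and> int_denom N q"
    using stab_order_denom_bound by blast
  define s where "s = complex_of_real (sp (0, 1))"
  define f where "f = (\<lambda>(j1::int, j2::int, j3::int, j4::int).
    emb (of_int j1 / of_int N, of_int j2 / of_int N) (of_int j3 / of_int N, of_int j4 / of_int N))"
  define S where "S = {1, s, \<alpha>, s * \<alpha>} \<union> (f ` ({0..<N} \<times> {0..<N} \<times> {0..<N} \<times> {0..<N}) \<inter> stab_order)"
  have S: "finite S" "S \<subseteq> stab_order"
    unfolding S_def s_def using stab_order_one stab_order_alpha stab_order_of_real[OF OD_sqrt]
    by (auto intro: stab_order_mult)
  have "g \<in> int_span S" if g: "g \<in> stab_order" for g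
  proof -
    obtain p1 p2 q1 q2 where gpq: "g = emb (p1, p2) (q1, q2)"
      using g stab_order_subset K_alpha_iff by (metis prod.collapse subsetD)
    hence "int_denom N (p1, p2)" "int_denom N (q1, q2)" using denom g by auto
    then obtain i1 i2 i3 i4 where i: "of_int N * p1 = of_int i1" "of_int N * p2 = of_int i2"
       "of_int N * q1 = of_int i3" "of_int N * q2 = of_int i4"
      unfolding int_denom_def by (auto elim!: Ints_cases)
    define g' where "g' = f (i1 mod N, i2 mod N, i3 mod N, i4 mod N)"
    define k where "k = emb (of_int (i1 div N), of_int (i2 div N)) (of_int (i3 div N), of_int (i4 div N))"
    have gk: "g = g' + k"
      unfolding g'_def k_def f_def gpq using i[THEN rat_eq_div_plus_mod[OF N]]
      by (simp add: emb_add kadd_def add.commute)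
    hence "g' \<in> stab_order" using stab_order_add[OF g stab_order_uminus[OF stab_order_emb_of_int]]
      unfolding k_def by (metis add_diff_cancel diff_conv_add_uminus)
    hence "g' \<in> S" unfolding S_def g'_def using N by auto
    hence "g' \<in> int_span S" using S(1) by (rule int_span_base[rotated])
    moreover have "k = of_int (i1 div N) * 1 + of_int (i2 div N) * s + of_int (i3 div N) * \<alpha> + of_int (i4 div N) * (s * \<alpha>)"
      unfolding k_def emb_of_int s_def by simp
    hence "k \<in> int_span S"
      by (simp only:, intro int_span_add int_span_of_int_mult int_span_base[OF S(1)]) (simp_all add: S_def)
    ultimately show ?thesis unfolding gk by (rule int_span_add)
  qed
  moreover have "int_span S \<subseteq> stab_order"
    using S(2) stab_order_zero stab_order_add stab_order_of_int_mult by (rule int_span_subset)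
  ultimately show ?thesis using S by blast
qed

lemma CM_ext_K_alpha: "CM_ext D K_alpha (\<lambda>x. of_real (sp x))"
  unfolding CM_ext_def
proof (intro conjI)
  show "subfield_C K_alpha" by (rule subfield_K_alpha)
  show "kd_embedding D K_alpha (\<lambda>x. of_real (sp x))"
    unfolding kd_embedding_def using emb_K_alpha emb_kzero by (metis sigp_kadd sigp_kmul sigp_kone of_real_add of_real_mult of_real_1)
  have "\<alpha> \<in> K_alpha" using emb_K_alpha emb_alpha by metis
  thus "totally_imaginary K_alpha"
    using totally_imaginary_if_root_of_unity subfield_K_alpha alpha_pow_n alpha_square_neq_1 n_gt_2 by simp
  have "\<alpha> \<notin> range (\<lambda>x. of_real (sp x))" using Im_alpha_nonzero by auto
  thus "\<exists>w \<in> K_alpha. w \<notin> range (\<lambda>x. of_real (sp x)) \<and> K_alpha = {of_real (sp a) + of_real (sp b) * w | a b. True}"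
    using \<open>\<alpha> \<in> K_alpha\<close> unfolding K_alpha_def by blast
qed

lemma order_in_stab_order: "order_in K_alpha stab_order"
  unfolding order_in_def
proof (intro conjI ballI)
  show "\<exists>S. finite S \<and> S \<subseteq> stab_order \<and> stab_order = {\<Sum>s\<in>S. of_int (c s) * s | c. True}"
    using stab_order_finitely_generated unfolding int_span_def .
qed (simp_all add: stab_order_subset stab_order_one stab_order_add stab_order_mult stab_order_uminus stab_order_spans)

text \<open>Properness holds because stab_order already contains every z in K_alpha with rho z an endomorphism.\<close>
lemma CM_hom_rho: "CM_hom D \<tau> K_alpha stab_order rho"
  unfolding CM_hom_def
proof (intro conjI ballI allI impI)
  show "rho 1 = mat 1" by (rule rho_one)
  fix x y assume "x \<in> stab_order" "y \<in> stab_order"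
  thus "rho (x + y) = rho x + rho y" "rho (x * y) = rho x ** rho y"
    using rho_add rho_mult stab_order_subset by blast+
next
  fix x assume x: "x \<in> stab_order"
  show "is_end D \<tau> (rho x)" using x unfolding stab_order_def by blast
  show "cnj x \<in> stab_order" using x by (rule stab_order_cnj)
next
  fix x and m :: int
  assume x: "x \<in> K_alpha" and m: "m > 0" and "is_end D \<tau> ((1 / real_of_int m) *\<^sub>R rho (of_int m * x))"
  moreover have "rho (of_int m) = diag (of_int m) (of_int m)"
    using rho_of_real[of "(of_int m, 0)"] by (simp add: iota_diag)
  moreover have "of_int m \<in> K_alpha" using stab_order_of_int stab_order_subset by blast
  moreover obtain p q where "x = emb p q" using x K_alpha_iff by blast
  ultimately have "is_end D \<tau> ((1 / real_of_int m) *\<^sub>R diag (of_int m * emb p q) (of_int m * emb' p q))"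
    by (simp add: rho_mult rho_emb diag_mult)
  moreover have "(1 / real_of_int m) *\<^sub>R (of_int m * z) = z" for z :: complex
    using m by (simp add: scaleR_conv_of_real)
  ultimately show "x \<in> stab_order" unfolding stab_order_def scaleR_diag
    using x \<open>x = emb p q\<close> by (simp add: rho_emb)
next
  fix z u v u' v'
  assume "z \<in> stab_order" "u \<in> LambdaD D" "v \<in> LambdaD D" "u' \<in> LambdaD D" "v' \<in> LambdaD D"
    "rho z *v phi D \<tau> u = phi D \<tau> u'" "rho (cnj z) *v phi D \<tau> v = phi D \<tau> v'"
  thus "symp D u' v = symp D u v'" using rosati_cnj by blast
qed

lemma CM_extends: "CM_extends D \<tau> n"
  unfolding CM_extends_def
  using CM_ext_K_alpha order_in_stab_order CM_hom_rho stab_order_of_real rho_of_real stab_order_alpha primitive_root_alpha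
  by blast

end

section \<open>Automorphisms from complex multiplication\<close>

locale complex_multiplication =
  fixes D :: int and \<tau> :: "complex \<times> complex" and L Ord :: "complex set" and \<rho> :: "complex \<Rightarrow> cmat"
  assumes field: "subfield_C L" and order: "order_in L Ord" and hom: "CM_hom D \<tau> L Ord \<rho>"
begin

lemma Ord_subset: "Ord \<subseteq> L" and Ord_one: "1 \<in> Ord"
  and Ord_add: "x \<in> Ord \<Longrightarrow> y \<in> Ord \<Longrightarrow> x + y \<in> Ord"
  and Ord_mult: "x \<in> Ord \<Longrightarrow> y \<in> Ord \<Longrightarrow> x * y \<in> Ord"
  and Ord_uminus: "x \<in> Ord \<Longrightarrow> - x \<in> Ord"
  and Ord_spans: "x \<in> L \<Longrightarrow> \<exists>m::int. m > 0 \<and> of_int m * x \<in> Ord"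
  using order unfolding order_in_def by blast+

lemma rho_one: "\<rho> 1 = mat 1" and rho_is_end: "x \<in> Ord \<Longrightarrow> is_end D \<tau> (\<rho> x)"
  and rho_add: "x \<in> Ord \<Longrightarrow> y \<in> Ord \<Longrightarrow> \<rho> (x + y) = \<rho> x + \<rho> y"
  and rho_mult: "x \<in> Ord \<Longrightarrow> y \<in> Ord \<Longrightarrow> \<rho> (x * y) = \<rho> x ** \<rho> y"
  and Ord_cnj: "x \<in> Ord \<Longrightarrow> cnj x \<in> Ord"
  using hom unfolding CM_hom_def by blast+

lemma rho_rosati:
  assumes "x \<in> Ord" "u \<in> LambdaD D" "v \<in> LambdaD D" "u' \<in> LambdaD D" "v' \<in> LambdaD D"
    "\<rho> x *v phi D \<tau> u = phi D \<tau> u'" "\<rho> (cnj x) *v phi D \<tau> v = phi D \<tau> v'"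
  shows "symp D u' v = symp D u v'"
  using hom assms unfolding CM_hom_def by blast

lemma Ord_zero: "0 \<in> Ord" and rho_zero: "\<rho> 0 = 0"
proof -
  show "0 \<in> Ord" using Ord_add[OF Ord_one Ord_uminus[OF Ord_one]] by simp
  thus "\<rho> 0 = 0" using rho_add[of 0 0] by simp
qed

lemma rho_of_nat: "of_nat k \<in> Ord \<and> \<rho> (of_nat k) = diag (of_nat k) (of_nat k)"
proof (induction k)
  case (Suc k)
  have "1 + of_nat k \<in> Ord" using Ord_add[OF Ord_one] Suc by blast
  moreover have "\<rho> (1 + of_nat k) = mat 1 + \<rho> (of_nat k)" using rho_add[OF Ord_one] Suc rho_one by simp
  ultimately show ?case using Suc by (simp add: mat_1_eq_diag diag_add)
qed (simp add: Ord_zero rho_zero diag_zero)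

lemma rho_minus_one: "\<rho> (- 1) = - mat 1"
  using rho_add[OF Ord_one Ord_uminus[OF Ord_one]] rho_zero rho_one by (simp add: eq_neg_iff_add_eq_0 add.commute)

text \<open>Since Ord spans L, a nonzero x in Ord divides some positive integer m in Ord, and rho m \<noteq> 0.\<close>
lemma rho_eq_0_iff: assumes "x \<in> Ord" shows "\<rho> x = 0 \<longleftrightarrow> x = 0"
proof
  assume rx: "\<rho> x = 0"
  show "x = 0"
  proof (rule ccontr)
    assume "x \<noteq> 0"
    have "inverse x \<in> L" using field assms Ord_subset unfolding subfield_C_def by blast
    then obtain m :: int where m: "m > 0" "of_int m * inverse x \<in> Ord" using Ord_spans by blast
    have "x * (of_int m * inverse x) = of_nat (nat m)" using \<open>x \<noteq> 0\<close> m(1) by simp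
    hence "\<rho> (of_nat (nat m)) = 0" using rho_mult[OF assms m(2)] rx by simp
    hence "diag (of_nat (nat m)) (of_nat (nat m)) = diag 0 0" using rho_of_nat diag_zero by simp
    thus False using m(1) by (simp add: diag_eq_iff)
  qed
qed (simp add: rho_zero)

lemma rho_power: "\<zeta> \<in> Ord \<Longrightarrow> \<zeta> ^ k \<in> Ord \<and> \<rho> (\<zeta> ^ k) = cmat_pow (\<rho> \<zeta>) k"
  by (induction k) (simp_all add: Ord_one rho_one Ord_mult rho_mult)

lemma cmat_order_rho:
  assumes "\<zeta> \<in> Ord" "primitive_root n \<zeta>" "n > 0"
  shows "cmat_order (\<rho> \<zeta>) n"
proof -
  have "cmat_pow (\<rho> \<zeta>) k = mat 1 \<longleftrightarrow> \<zeta> ^ k = 1" for k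
  proof -
    have "\<zeta> ^ k + - 1 \<in> Ord" using rho_power[OF assms(1)] Ord_add Ord_uminus Ord_one by blast
    hence "\<rho> (\<zeta> ^ k + - 1) = 0 \<longleftrightarrow> \<zeta> ^ k = 1" using rho_eq_0_iff by simp
    moreover have "\<rho> (\<zeta> ^ k + - 1) = cmat_pow (\<rho> \<zeta>) k - mat 1"
      using rho_add[of "\<zeta> ^ k" "- 1"] rho_power[OF assms(1)] Ord_uminus[OF Ord_one] rho_minus_one by simp
    ultimately show ?thesis by simp
  qed
  thus ?thesis using assms(2,3) unfolding cmat_order_def primitive_root_def by simp
qed

text \<open>A root of unity is a unit with cnj zeta = zeta^-1, so the Rosati condition makes rho zeta symplectic.\<close>
lemma ppav_aut_rho:
  assumes \<zeta>: "\<zeta> \<in> Ord" "\<zeta> ^ n = 1" "n > 0"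
  shows "ppav_aut D \<tau> (\<rho> \<zeta>)"
proof -
  have "\<zeta> ^ (n - 1) * \<zeta> = 1" "\<zeta> * \<zeta> ^ (n - 1) = 1" using \<zeta>(2,3) by (cases n; simp add: mult.commute)+
  hence inv: "\<rho> (\<zeta> ^ (n - 1)) ** \<rho> \<zeta> = mat 1" "\<rho> \<zeta> ** \<rho> (\<zeta> ^ (n - 1)) = mat 1"
    using rho_mult[OF rho_power[OF \<zeta>(1), of "n - 1", THEN conjunct1] \<zeta>(1)] rho_mult[OF \<zeta>(1) rho_power[OF \<zeta>(1), of "n - 1", THEN conjunct1]] rho_one
    by simp_all
  have "\<rho> (cnj \<zeta>) ** \<rho> \<zeta> = mat 1"
    using rho_mult[OF Ord_cnj[OF \<zeta>(1)] \<zeta>(1)] cnj_mult_root_of_unity[OF \<zeta>(2,3)] rho_one by simp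
  hence "\<rho> (cnj \<zeta>) *v phi D \<tau> v' = phi D \<tau> v" if "\<rho> \<zeta> *v phi D \<tau> v = phi D \<tau> v'" for v v'
    using that by (metis matrix_vector_mul_assoc matrix_vector_mul_lid)
  hence "symp D u' v' = symp D u v"
    if "u \<in> LambdaD D" "v \<in> LambdaD D" "u' \<in> LambdaD D" "v' \<in> LambdaD D"
       "\<rho> \<zeta> *v phi D \<tau> u = phi D \<tau> u'" "\<rho> \<zeta> *v phi D \<tau> v = phi D \<tau> v'" for u v u' v'
    using that rho_rosati[OF \<zeta>(1), of u v' u' v] by simp
  thus ?thesis unfolding ppav_aut_def using rho_is_end \<zeta>(1) rho_power inv by blast
qed

end

lemma commuting_aut_of_CM_extends:
  assumes "n > 0" "CM_extends D \<tau> n"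
  shows "\<exists>M. ppav_aut D \<tau> M \<and> cmat_order M n \<and> (\<forall>x \<in> OD D. M ** iota D \<tau> x = iota D \<tau> x ** M)"
proof -
  obtain L j Ord \<rho> \<zeta> where ext: "CM_ext D L j" and "order_in L Ord" "CM_hom D \<tau> L Ord \<rho>"
    and j: "\<forall>x \<in> OD D. j x \<in> Ord \<and> \<rho> (j x) = iota D \<tau> x" and \<zeta>: "\<zeta> \<in> Ord" "primitive_root n \<zeta>"
    using assms(2) unfolding CM_extends_def by blast
  moreover have "subfield_C L" using ext unfolding CM_ext_def by blast
  ultimately interpret complex_multiplication D \<tau> L Ord \<rho> by unfold_locales
  have "ppav_aut D \<tau> (\<rho> \<zeta>)" using ppav_aut_rho \<zeta> assms(1) unfolding primitive_root_def by blast
  moreover have "cmat_order (\<rho> \<zeta>) n" using cmat_order_rho \<zeta> assms(1) by blast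
  moreover have "\<rho> \<zeta> ** iota D \<tau> x = iota D \<tau> x ** \<rho> \<zeta>" if "x \<in> OD D" for x
    using rho_mult[OF \<zeta>(1), of "j x"] rho_mult[of "j x" \<zeta>] j that \<zeta>(1) by (simp add: mult.commute)
  ultimately show ?thesis by blast
qed

context hilbert_point
begin

lemma CM_extends_of_commuting_aut:
  assumes "n > 2" and M: "ppav_aut D \<tau> M" "cmat_order M n" "\<forall>x \<in> OD D. M ** iota D \<tau> x = iota D \<tau> x ** M"
  shows "CM_extends D \<tau> n"
proof -
  obtain A where "A \<in> SL_Lambda D" "represents (M$1$1) (M$2$2) A" and Md: "M = diag (M$1$1) (M$2$2)"
    using represents_commuting_aut[OF M(1,3)] by blast
  moreover obtain a b c d where "A = (a, b, c, d)" by (cases A) auto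
  moreover have "cmat_order (diag (M$1$1) (M$2$2)) n" using M(2) Md by simp
  ultimately interpret diagonal_aut D \<tau> n "M$1$1" "M$2$2" a b c d
    using \<open>n > 2\<close> by unfold_locales auto
  show ?thesis by (rule CM_extends)
qed

end

theorem proposition3p3:
  fixes D :: int and \<tau> :: "complex \<times> complex" and n :: nat
  assumes "real_quadratic_disc D"
    and "Im (fst \<tau>) > 0" and "Im (snd \<tau>) > 0"
    and "n > 2"
  shows "((\<exists>A \<in> SL_Lambda D. kmat_order D A n \<and> sl_act D A \<tau> = \<tau>) \<longleftrightarrow>
           (\<exists>M. ppav_aut D \<tau> M \<and> cmat_order M n \<and>
                (\<forall>x \<in> OD D. M ** iota D \<tau> x = iota D \<tau> x ** M)))
       \<and> ((\<exists>M. ppav_aut D \<tau> M \<and> cmat_order M n \<and>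
                (\<forall>x \<in> OD D. M ** iota D \<tau> x = iota D \<tau> x ** M)) \<longleftrightarrow>
           CM_extends D \<tau> n)"
proof -
  interpret hilbert_point D \<tau> using assms(1-3) by unfold_locales
  have "n > 0" using assms(4) by simp
  thus ?thesis
    using commuting_aut_of_fixing_element fixing_element_of_commuting_aut
      CM_extends_of_commuting_aut[OF assms(4)] commuting_aut_of_CM_extends
    by blast
qed

end
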